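(* Let $q$ be a prime power and let $C\subseteq \mathrm{GF}(q^m)^n$ be a (linear or nonlinear) code containing the all-zero vector, with $n\le m$, $|C|=q^{mk}$ for an integer $1\le k\le n$, and minimum rank distance $d_{\mathrm R}=n-k+1$. Let $r=n-k$ and $t=\lfloor (d_{\mathrm R}-1)/2\rfloor$. For an integer $u$ with $d_{\mathrm R}-t\le u<d_{\mathrm R}$, let $D_u$ be the number of vectors $\mathbf y\in\mathrm{GF}(q^m)^n$ of rank $u$ for which there is a codeword $\mathbf c\in C$ with $\mathrm{rk}(\mathbf y-\mathbf c)\le t$. Then $$D_u<\frac{q^2}{q^2-1}{n\brack u}(q^m-1)^{u-r}V_t,$$ where $V_t=\sum_{i=0}^{t}N_i$.
   Context: $A(m,0)=1$ and $A(m,u)=\prod_{i=0}^{u-1}(q^m-q^i)$ for $u\ge1$; ${n\brack u}=A(n,u)/A(u,u)$ is the Gaussian binomial. For $\mathbf x=(x_0,\dots,x_{n-1})\in\mathrm{GF}(q^m)^n$, $\mathrm{rk}(\mathbf x)$ is the dimension over $\mathrm{GF}(q)$ of the $\mathrm{GF}(q)$-span of its coordinates (equivalently the rank of the $m\times n$ expansion matrix over $\mathrm{GF}(q)$). $N_i={n\brack i}A(m,i)$ is the number of vectors of rank $i$ in $\mathrm{GF}(q^m)^n$. The minimum rank distance of $C$ is the minimum of $\mathrm{rk}(\mathbf c-\mathbf d)$ over distinct codewords. *)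

theory Defs
  imports Complex_Main "HOL-Computational_Algebra.Primes"
begin

text \<open>Ambient field: a finite field type 'a with CARD('a) = q^m, i.e. GF(q^m).
  The subfield GF(q) inside it is the set of fixed points of the q-Frobenius.\<close>

definition base_field :: "nat \<Rightarrow> ('a::field) set" where
  "base_field q = {x. x ^ q = x}"

definition indep_over :: "'a::field set \<Rightarrow> (nat \<Rightarrow> 'a) \<Rightarrow> nat set \<Rightarrow> bool" where
  "indep_over F0 v J \<longleftrightarrow>
     (\<forall>c. (\<forall>j\<in>J. c j \<in> F0) \<longrightarrow> (\<Sum>j\<in>J. c j * v j) = 0 \<longrightarrow> (\<forall>j\<in>J. c j = 0))"

text \<open>Rank of a vector: dimension over F0 of the F0-span of its coordinates
  (= maximal number of F0-linearly independent coordinates).\<close>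
definition rk :: "'a::field set \<Rightarrow> 'a list \<Rightarrow> nat" where
  "rk F0 xs = Max {card J | J. J \<subseteq> {0..<length xs} \<and> indep_over F0 (nth xs) J}"

definition vdiff :: "'a::field list \<Rightarrow> 'a list \<Rightarrow> 'a list" where
  "vdiff x y = map2 (-) x y"

definition min_rank_dist :: "'a::field set \<Rightarrow> 'a list set \<Rightarrow> nat" where
  "min_rank_dist F0 C = Min {rk F0 (vdiff c d) | c d. c \<in> C \<and> d \<in> C \<and> c \<noteq> d}"

definition A_fun :: "nat \<Rightarrow> nat \<Rightarrow> nat \<Rightarrow> real" where
  "A_fun q m u = (\<Prod>i<u. (real q ^ m - real q ^ i))"

definition gauss_binom :: "nat \<Rightarrow> nat \<Rightarrow> nat \<Rightarrow> real" where
  "gauss_binom q n u = A_fun q n u / A_fun q u u"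

definition N_rank :: "nat \<Rightarrow> nat \<Rightarrow> nat \<Rightarrow> nat \<Rightarrow> real" where
  "N_rank q m n i = gauss_binom q n i * A_fun q m i"

definition V_ball :: "nat \<Rightarrow> nat \<Rightarrow> nat \<Rightarrow> nat \<Rightarrow> real" where
  "V_ball q m n t = (\<Sum>i\<le>t. N_rank q m n i)"

end

theory Submission
  imports Defs "HOL-Computational_Algebra.Polynomial" "HOL-Library.Function_Algebras"
    "HOL-Number_Theory.Residues"
begin

text \<open>Group the words \<open>y\<close> of rank \<open>u\<close> by their relation space \<open>R\<close>, the right kernel
  of the expansion matrix of \<open>y\<close>, an \<open>(n - u)\<close>-dimensional subspace of \<open>GF(q)\<^sup>n\<close>;
  there are \<open>[n, u]\<^sub>q\<close> of them. After a change of basis of \<open>GF(q)\<^sup>n\<close> adapted to \<open>R\<close>,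
  the words with relation space \<open>R\<close> end in \<open>d = n - u\<close> zeros. If \<open>y = c + e\<close> with
  \<open>c \<in> C\<close> and \<open>rk e \<le> t < u\<close>, the last \<open>d\<close> coordinates of \<open>e\<close> are those of \<open>-c\<close>, say
  \<open>-z\<close>, and \<open>z \<noteq> 0\<close>. These projected codewords \<open>z\<close> form a code of rank distance at
  least \<open>d - k + 1\<close>, and the number of possible \<open>e\<close> depends only on \<open>rk z\<close>. Sorting
  the \<open>z\<close> by their own relation space, a Singleton-type argument leaves at most
  \<open>q ^ (m (w - d + k))\<close> of them among the \<open>A(m,w)\<close> words of each class of rank
  \<open>w \<le> t\<close>. Hence for fixed \<open>R\<close> there are at most \<open>q ^ (m t) / A(m,t) \<cdot> q ^ (- m (d - k))\<close>
  times \<open>V\<^sub>t\<close> words \<open>y\<close>, and Weierstrass' product inequality gives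
  \<open>q ^ (m t) / A(m,t) < q\<^sup>2 / (q\<^sup>2 - 1)\<close>.\<close>

lemma card_eq_sum_card_fibers:
  assumes "finite A"
  shows "card A = (\<Sum>y\<in>f ` A. card {x\<in>A. f x = y})"
  using sum.image_gen[OF assms, of "\<lambda>_. (1::nat)" f] by (simp add: card_eq_sum[symmetric])

lemma card_eq_card_image_mult_card_kernel:
  fixes f :: "'a::ab_group_add \<Rightarrow> 'b::ab_group_add"
  assumes "finite S"
    and S_diff: "\<And>x y. x \<in> S \<Longrightarrow> y \<in> S \<Longrightarrow> x - y \<in> S"
    and f_diff: "\<And>x y. x \<in> S \<Longrightarrow> y \<in> S \<Longrightarrow> f (x - y) = f x - f y"
  shows "card S = card (f ` S) * card {x\<in>S. f x = 0}"
proof -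
  have fiber: "{x\<in>S. f x = f x0} = (\<lambda>g. g + x0) ` {x\<in>S. f x = 0}" if x0: "x0 \<in> S" for x0
  proof (intro equalityI subsetI)
    fix x assume "x \<in> {x\<in>S. f x = f x0}"
    thus "x \<in> (\<lambda>g. g + x0) ` {x\<in>S. f x = 0}"
      using S_diff f_diff x0 by (intro image_eqI[of _ _ "x - x0"]) auto
  next
    fix x assume "x \<in> (\<lambda>g. g + x0) ` {x\<in>S. f x = 0}"
    then obtain g where g: "g \<in> S" "f g = 0" "x = g + x0" by auto
    have "- x0 \<in> S" using S_diff[OF S_diff[OF x0 x0] x0] by simp
    hence "x \<in> S" using S_diff[OF g(1)] g(3) by fastforce
    moreover have "f x - f x0 = 0" using f_diff[OF \<open>x \<in> S\<close> x0] g by simp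
    ultimately show "x \<in> {x\<in>S. f x = f x0}" by simp
  qed
  have "card {x\<in>S. f x = y} = card {x\<in>S. f x = 0}" if "y \<in> f ` S" for y
    using that by (auto simp: fiber card_image inj_on_def)
  hence "(\<Sum>y\<in>f ` S. card {x\<in>S. f x = y}) = card (f ` S) * card {x\<in>S. f x = 0}"
    by simp
  thus ?thesis using card_eq_sum_card_fibers[OF assms(1), of f] by simp
qed

lemma finite_field_power_card_UNIV:
  fixes x :: "'a::{finite,field}"
  shows "x ^ card (UNIV :: 'a set) = x"
proof -
  let ?U = "UNIV - {0::'a}"
  have card_UNIV: "card (UNIV :: 'a set) = Suc (card ?U)"
    using card_Diff_singleton[of 0 "UNIV :: 'a set"] finite_UNIV_card_ge_0[where 'a = 'a] by simp
  show ?thesis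
  proof (cases "x = 0")
    case False
    have "bij_betw ((*) x) ?U ?U"
      using False by (intro bij_betwI[where g = "\<lambda>y. y / x"]) auto
    hence "(\<Prod>y\<in>?U. x * y) = (\<Prod>y\<in>?U. y)" by (rule prod.reindex_bij_betw)
    hence "x ^ card ?U * (\<Prod>y\<in>?U. y) = 1 * (\<Prod>y\<in>?U. y)" by (simp add: prod.distrib)
    moreover have "(\<Prod>y\<in>?U. y) \<noteq> 0" by simp
    ultimately have "x ^ card ?U = 1" by (simp only: mult_cancel_right) simp
    thus ?thesis by (simp only: card_UNIV power_Suc) simp
  qed (simp only: card_UNIV power_Suc mult_zero_left)
qed

definition rank_dist_ge :: "'a::field set \<Rightarrow> 'a list set \<Rightarrow> nat \<Rightarrow> bool" where
  "rank_dist_ge F C \<delta> \<longleftrightarrow> (\<forall>c\<in>C. \<forall>c'\<in>C. c \<noteq> c' \<longrightarrow> \<delta> \<le> rk F (vdiff c c'))"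

lemma rank_dist_ge_min_rank_dist:
  assumes "finite C"
  shows "rank_dist_ge F C (min_rank_dist F C)"
  unfolding rank_dist_ge_def min_rank_dist_def
proof (intro ballI impI)
  fix c c' assume cc: "c \<in> C" "c' \<in> C" "c \<noteq> c'"
  have "{rk F (vdiff c d) | c d. c \<in> C \<and> d \<in> C \<and> c \<noteq> d} \<subseteq> (\<lambda>(c, d). rk F (vdiff c d)) ` (C \<times> C)"
    by auto
  hence "finite {rk F (vdiff c d) | c d. c \<in> C \<and> d \<in> C \<and> c \<noteq> d}"
    by (rule finite_subset) (simp add: assms)
  thus "Min {rk F (vdiff c d) | c d. c \<in> C \<and> d \<in> C \<and> c \<noteq> d} \<le> rk F (vdiff c c')"
    using cc by (intro Min_le) auto
qed

section \<open>The products \<open>A(m,u)\<close> and Gaussian binomials\<close>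

lemma A_fun_nonneg:
  assumes "q \<ge> 1"
  shows "0 \<le> A_fun q m t"
proof (cases "t \<le> m")
  case True
  thus ?thesis unfolding A_fun_def using assms by (intro prod_nonneg) (auto intro!: power_increasing)
next
  case False
  hence "A_fun q m t = 0" unfolding A_fun_def by (intro prod_zero bexI[of _ m]) auto
  thus ?thesis by simp
qed

lemma A_fun_pos:
  assumes "q \<ge> 2" "t \<le> m"
  shows "0 < A_fun q m t"
  unfolding A_fun_def using assms by (intro prod_pos) (auto intro!: power_strict_increasing)

lemma A_fun_of_nat:
  assumes "q \<ge> 1" "t \<le> m"
  shows "A_fun q m t = real (\<Prod>i<t. q ^ m - q ^ i)"
  unfolding A_fun_def using assms by (simp add: of_nat_diff power_increasing)

lemma A_fun_le_mult_power:
  assumes "q \<ge> 1" "w \<le> t" "t \<le> m"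
  shows "A_fun q m t \<le> A_fun q m w * (real q ^ m) ^ (t - w)"
  using assms(2,3)
proof (induction t rule: dec_induct)
  case base thus ?case by simp
next
  case (step t)
  have "A_fun q m (Suc t) = A_fun q m t * (real q ^ m - real q ^ t)" by (simp add: A_fun_def)
  also have "\<dots> \<le> A_fun q m t * real q ^ m"
    using A_fun_nonneg[OF assms(1)] by (intro mult_left_mono) auto
  also have "\<dots> \<le> A_fun q m w * (real q ^ m) ^ (t - w) * real q ^ m"
    using step by (intro mult_right_mono) auto
  also have "\<dots> = A_fun q m w * (real q ^ m) ^ (Suc t - w)"
    using step by (simp add: Suc_diff_le)
  finally show ?case .
qed

lemma power_le_A_fun_ratio:
  assumes "q \<ge> 2" "D \<le> w" "w \<le> t" "t \<le> m"
  shows "(real q ^ m) ^ (w - D) \<le> (real q ^ m) ^ t / A_fun q m t / (real q ^ m) ^ D * A_fun q m w"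
proof -
  define Q where "Q = real q ^ m"
  have Q: "Q > 0" using assms(1) by (simp add: Q_def)
  have At: "A_fun q m t > 0" using A_fun_pos assms by simp
  have "Q ^ (w - D) * (A_fun q m t * Q ^ D) = Q ^ w * A_fun q m t"
    using assms by (simp add: power_add[symmetric] mult_ac)
  also have "\<dots> \<le> Q ^ w * (A_fun q m w * Q ^ (t - w))"
    using A_fun_le_mult_power[of q w t m] assms Q by (intro mult_left_mono) (auto simp: Q_def)
  also have "\<dots> = Q ^ t * A_fun q m w" using assms by (simp add: power_add[symmetric] mult_ac)
  finally have "Q ^ (w - D) \<le> Q ^ t * A_fun q m w / (A_fun q m t * Q ^ D)"
    using At Q by (simp add: pos_le_divide_eq)
  thus ?thesis by (simp add: Q_def field_simps)
qed

lemma prod_lessThan_add: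
  fixes f :: "nat \<Rightarrow> real"
  shows "(\<Prod>i<j + l. f i) = (\<Prod>i<j. f i) * (\<Prod>i<l. f (j + i))"
  by (induction l) (simp_all add: mult.assoc)

lemma A_fun_split:
  assumes "j \<le> n"
  shows "A_fun q n n = A_fun q n j * (real q) ^ (j * (n - j)) * A_fun q (n - j) (n - j)"
proof -
  have "A_fun q n n = (\<Prod>i<j + (n - j). real q ^ n - real q ^ i)" using assms by (simp add: A_fun_def)
  also have "\<dots> = A_fun q n j * (\<Prod>i<n - j. real q ^ n - real q ^ (j + i))"
    by (simp add: prod_lessThan_add A_fun_def)
  also have "(\<Prod>i<n - j. real q ^ n - real q ^ (j + i))
      = (\<Prod>i<n - j. real q ^ j * (real q ^ (n - j) - real q ^ i))"
    using assms by (intro prod.cong) (auto simp: algebra_simps power_add[symmetric])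
  also have "\<dots> = (real q ^ j) ^ (n - j) * A_fun q (n - j) (n - j)"
    by (simp add: prod.distrib A_fun_def)
  finally show ?thesis by (simp add: power_mult mult.assoc)
qed

lemma gauss_binom_symmetric:
  assumes "q \<ge> 2" "j \<le> n"
  shows "gauss_binom q n j = gauss_binom q n (n - j)"
proof -
  have "A_fun q n j * A_fun q (n - j) (n - j) * real q ^ (j * (n - j)) = A_fun q n n"
    using A_fun_split[OF assms(2), of q] by (simp add: ac_simps)
  also have "\<dots> = A_fun q n (n - j) * A_fun q j j * real q ^ (j * (n - j))"
    using A_fun_split[of "n - j" n q] assms(2) by (simp add: ac_simps)
  finally have "A_fun q n j * A_fun q (n - j) (n - j) = A_fun q n (n - j) * A_fun q j j"
    using assms(1) by simp
  moreover have "A_fun q j j \<noteq> 0" "A_fun q (n - j) (n - j) \<noteq> 0"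
    using A_fun_pos[OF assms(1)] by (metis less_irrefl order_refl)+
  ultimately show ?thesis unfolding gauss_binom_def by (simp add: frac_eq_eq)
qed

lemma gauss_binom_pos:
  assumes "q \<ge> 2" "u \<le> n"
  shows "0 < gauss_binom q n u"
  unfolding gauss_binom_def using A_fun_pos[OF assms(1)] assms(2) by simp

lemma N_rank_nonneg:
  assumes "q \<ge> 1"
  shows "0 \<le> N_rank q m n i"
  unfolding N_rank_def gauss_binom_def
  by (intro mult_nonneg_nonneg divide_nonneg_nonneg A_fun_nonneg assms)

lemma V_ball_pos:
  assumes "q \<ge> 1"
  shows "0 < V_ball q m n t"
proof -
  have "N_rank q m n 0 \<le> V_ball q m n t"
    unfolding V_ball_def using N_rank_nonneg[OF assms] by (intro member_le_sum) auto
  moreover have "N_rank q m n 0 = 1" by (simp add: N_rank_def gauss_binom_def A_fun_def)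
  ultimately show ?thesis by simp
qed

lemma sum_power_less_le: "q \<ge> 2 \<Longrightarrow> (\<Sum>i<t. real q ^ i) \<le> real q ^ t - 1"
proof (induction t)
  case (Suc t)
  have "(\<Sum>i<Suc t. real q ^ i) \<le> real q ^ t - 1 + real q ^ t" using Suc by simp
  also have "\<dots> \<le> real q ^ Suc t - 1" using Suc.prems by simp
  finally show ?case .
qed simp

text \<open>Weierstrass' product inequality, multiplied through by \<open>a\<close>.\<close>

lemma prod_diff_mult_ge:
  fixes a :: real
  assumes "a \<ge> 0" "\<And>i. i < t \<Longrightarrow> 0 \<le> b i \<and> b i \<le> a"
  shows "(\<Prod>i<t. a - b i) * a \<ge> a ^ t * (a - (\<Sum>i<t. b i))"
  using assms(2)
proof (induction t)
  case (Suc t)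
  define S where "S = (\<Sum>i<t. b i)"
  have S0: "S \<ge> 0" unfolding S_def using Suc.prems by (intro sum_nonneg) auto
  have bt: "0 \<le> b t" "b t \<le> a" using Suc.prems by auto
  have IH: "(\<Prod>i<t. a - b i) * a \<ge> a ^ t * (a - S)" using Suc unfolding S_def by auto
  have "a ^ Suc t * (a - (S + b t)) \<le> a ^ Suc t * (a - (S + b t)) + a ^ t * S * b t"
    using S0 bt assms(1) by simp
  also have "\<dots> = a ^ t * (a - S) * (a - b t)" by (simp add: algebra_simps)
  also have "\<dots> \<le> ((\<Prod>i<t. a - b i) * a) * (a - b t)" using IH bt by (intro mult_right_mono) auto
  also have "\<dots> = (\<Prod>i<Suc t. a - b i) * a" by (simp add: mult_ac)
  finally show ?case by (simp add: S_def)
qed simp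

text \<open>Since \<open>\<Sum>i<t. q ^ i < q ^ (m - 2)\<close>, Weierstrass' inequality gives
  \<open>A(m,t) > q ^ (m t) (1 - 1 / q\<^sup>2)\<close>.\<close>

lemma power_div_A_fun_less:
  assumes "q \<ge> 2" "t + 2 \<le> m"
  shows "(real q ^ m) ^ t / A_fun q m t < real q ^ 2 / (real q ^ 2 - 1)"
proof -
  define Q where "Q = real q ^ m"
  define S where "S = (\<Sum>i<t. real q ^ i)"
  have q2: "real q \<ge> 2" using assms(1) by simp
  have Q: "Q > 0" using q2 by (simp add: Q_def)
  have A: "A_fun q m t > 0" using A_fun_pos assms by simp
  have pg: "A_fun q m t * Q \<ge> Q ^ t * (Q - S)"
    unfolding A_fun_def Q_def S_def
  proof (rule prod_diff_mult_ge)
    fix i assume "i < t"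
    thus "0 \<le> real q ^ i \<and> real q ^ i \<le> real q ^ m" using q2 assms by (auto intro!: power_increasing)
  qed (use q2 in simp)
  have "S \<le> real q ^ t - 1" unfolding S_def using sum_power_less_le assms(1) by simp
  also have "real q ^ t \<le> real q ^ (m - 2)" using q2 assms by (intro power_increasing) auto
  finally have S: "S < real q ^ (m - 2)" by simp
  have "m = (m - 2) + 2" using assms(2) by simp
  hence Qm: "Q = real q ^ (m - 2) * real q ^ 2" unfolding Q_def by (metis power_add)
  have "Q ^ t * (Q * (real q ^ 2 - 1)) = Q ^ t * (Q - real q ^ (m - 2)) * real q ^ 2"
    using Qm by (simp add: algebra_simps)
  also have "\<dots> < Q ^ t * (Q - S) * real q ^ 2"
    using S Q q2 by (intro mult_strict_right_mono mult_strict_left_mono) auto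
  also have "\<dots> \<le> A_fun q m t * Q * real q ^ 2" using pg q2 by (intro mult_right_mono) auto
  finally have "Q ^ t * (real q ^ 2 - 1) < A_fun q m t * real q ^ 2" using Q by (simp add: mult_ac)
  hence "Q ^ t < A_fun q m t * real q ^ 2 / (real q ^ 2 - 1)" using q2 by (simp add: pos_less_divide_eq)
  hence "Q ^ t / A_fun q m t < real q ^ 2 / (real q ^ 2 - 1)" using A by (simp add: divide_less_eq mult_ac)
  thus ?thesis by (simp add: Q_def)
qed

lemma power_div_A_fun_div_power_less:
  assumes "q \<ge> 2" "t + 2 \<le> m"
  shows "(real q ^ m) ^ t / A_fun q m t / (real q ^ m) ^ x
    < real q ^ 2 / (real q ^ 2 - 1) * (real q ^ m - 1) powi (- int x)"
proof -
  define Q where "Q = real q ^ m"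
  have "real q \<le> Q" unfolding Q_def using assms by (intro self_le_power) auto
  hence Q: "Q \<ge> 2" using assms(1) by linarith
  have "1 / Q ^ x \<le> 1 / (Q - 1) ^ x"
    using Q by (intro divide_left_mono power_mono mult_pos_pos) auto
  also have "\<dots> = (Q - 1) powi (- int x)" by (simp add: power_int_minus divide_inverse)
  finally have "1 / Q ^ x \<le> (Q - 1) powi (- int x)" .
  moreover have "Q ^ t / A_fun q m t < real q ^ 2 / (real q ^ 2 - 1)"
    using power_div_A_fun_less[OF assms] by (simp add: Q_def)
  moreover have "0 < 1 / Q ^ x" "0 < real q ^ 2 / (real q ^ 2 - 1)" using Q assms(1) by auto
  ultimately have "Q ^ t / A_fun q m t * (1 / Q ^ x)
      < real q ^ 2 / (real q ^ 2 - 1) * (Q - 1) powi (- int x)"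
    by (meson less_le_trans mult_left_mono mult_strict_right_mono less_imp_le)
  thus ?thesis by (simp add: Q_def)
qed

section \<open>The subfield \<open>GF(q)\<close> of \<open>GF(q\<^sup>m)\<close>\<close>

locale gf_extension =
  fixes p e q m :: nat
  assumes prime_p: "prime p" and e_pos: "e \<ge> 1" and q_def: "q = p ^ e" and m_pos: "m \<ge> 1"
    and card_UNIV_eq: "card (UNIV :: 'a::{finite,field} set) = q ^ m"
begin

abbreviation Fq :: "'a set" where "Fq \<equiv> base_field q"

lemma q_ge_2: "q \<ge> 2"
proof -
  have "p \<ge> 2" using prime_p prime_ge_2_nat by blast
  have "p ^ 1 \<le> p ^ e" using e_pos \<open>p \<ge> 2\<close> by (intro power_increasing) auto
  thus ?thesis using \<open>p \<ge> 2\<close> q_def by simp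
qed

lemma CHAR_eq: "CHAR('a) = p"
proof -
  have "prime CHAR('a)" using prime_CHAR_semidom finite_imp_CHAR_pos[where 'a='a] by simp
  moreover have "CHAR('a) dvd p ^ (e * m)" using CHAR_dvd_CARD[where 'a='a] card_UNIV_eq q_def
    by (simp add: power_mult)
  ultimately show ?thesis using prime_dvd_power primes_dvd_imp_eq prime_p by blast
qed

lemma frobenius_q_add: "(x + y :: 'a) ^ (q ^ j) = x ^ (q ^ j) + y ^ (q ^ j)"
  using freshmans_dream'[of "p ^ (e * j)" "e * j" x y] CHAR_eq prime_p
  by (simp add: q_def power_mult)

lemma frobenius_q_diff: "(x - y :: 'a) ^ (q ^ j) = x ^ (q ^ j) - y ^ (q ^ j)"
  using frobenius_q_add[of "x - y" y j] by (simp add: algebra_simps)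

lemma Fq_iff: "x \<in> Fq \<longleftrightarrow> x ^ q = x" by (simp add: base_field_def)

lemma Fq_zero: "0 \<in> Fq" using q_ge_2 by (simp add: Fq_iff)
lemma Fq_one: "1 \<in> Fq" by (simp add: Fq_iff)
lemma Fq_add: "x \<in> Fq \<Longrightarrow> y \<in> Fq \<Longrightarrow> x + y \<in> Fq"
  using frobenius_q_add[of x y 1] by (simp add: Fq_iff)
lemma Fq_diff: "x \<in> Fq \<Longrightarrow> y \<in> Fq \<Longrightarrow> x - y \<in> Fq"
  using frobenius_q_diff[of x y 1] by (simp add: Fq_iff)
lemma Fq_uminus: "x \<in> Fq \<Longrightarrow> - x \<in> Fq"
  using Fq_diff[OF Fq_zero, of x] by simp
lemma Fq_mult: "x \<in> Fq \<Longrightarrow> y \<in> Fq \<Longrightarrow> x * y \<in> Fq"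
  by (simp add: Fq_iff power_mult_distrib)
lemma Fq_inverse: "x \<in> Fq \<Longrightarrow> inverse x \<in> Fq"
  by (simp add: Fq_iff power_inverse)

lemma power_q_power_m: "(x::'a) ^ (q ^ m) = x"
  using finite_field_power_card_UNIV[of x] card_UNIV_eq by simp

lemma card_Fq_le: "card Fq \<le> q"
proof -
  define P :: "'a poly" where "P = Polynomial.monom 1 q - Polynomial.monom 1 1"
  have "Polynomial.coeff P q = 1" using q_ge_2 by (simp add: P_def)
  hence "P \<noteq> 0" by auto
  have "degree P \<le> q" unfolding P_def using q_ge_2
    by (intro degree_diff_le) (auto intro: order_trans[OF degree_monom_le])
  moreover have "Fq = {x. poly P x = 0}" by (auto simp: P_def Fq_iff poly_monom)
  ultimately show ?thesis using card_poly_roots_bound[OF \<open>P \<noteq> 0\<close>] by simp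
qed

text \<open>Every value of \<open>x ^ q - x\<close> is a root of the trace polynomial
  \<open>\<Sum>i<m. X ^ q ^ i\<close>, since applying it telescopes to \<open>x ^ q ^ m - x = 0\<close>.\<close>

lemma card_range_power_q_minus_le: "card (range (\<lambda>x::'a. x ^ q - x)) \<le> q ^ (m - 1)"
proof -
  define T :: "'a poly" where "T = (\<Sum>i<m. Polynomial.monom 1 (q ^ i))"
  have "Polynomial.coeff T (q ^ (m - 1)) = (\<Sum>i<m. if q ^ i = q ^ (m - 1) then 1 else 0)"
    by (simp add: T_def coeff_sum)
  also have "\<dots> = (\<Sum>i\<in>{m - 1}. 1)"
    using m_pos q_ge_2 by (intro sum.mono_neutral_cong_right) auto
  finally have "T \<noteq> 0" by auto
  have deg: "degree T \<le> q ^ (m - 1)"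
    unfolding T_def
  proof (rule degree_sum_le)
    fix i assume "i \<in> {..<m}"
    hence "q ^ i \<le> q ^ (m - 1)" using q_ge_2 by (intro power_increasing) auto
    thus "degree (Polynomial.monom (1::'a) (q ^ i)) \<le> q ^ (m - 1)" using degree_monom_le order_trans by blast
  qed simp
  have "poly T (x ^ q - x) = (\<Sum>i<m. x ^ (q ^ Suc i) - x ^ (q ^ i))" for x
    by (simp add: T_def poly_sum poly_monom frobenius_q_diff power_mult[symmetric] mult.commute)
  also have "\<dots> x = x ^ (q ^ m) - x ^ (q ^ 0)" for x by (rule sum_lessThan_telescope)
  also have "\<dots> x = 0" for x by (simp add: power_q_power_m)
  finally have "range (\<lambda>x::'a. x ^ q - x) \<subseteq> {x. poly T x = 0}" by auto
  hence "card (range (\<lambda>x::'a. x ^ q - x)) \<le> card {x. poly T x = 0}"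
    using poly_roots_finite[OF \<open>T \<noteq> 0\<close>] by (intro card_mono) auto
  also have "\<dots> \<le> q ^ (m - 1)" using card_poly_roots_bound[OF \<open>T \<noteq> 0\<close>] deg by simp
  finally show ?thesis .
qed

lemma card_Fq: "card Fq = q"
proof -
  have Fq_eq: "Fq = {x \<in> UNIV. x ^ q - x = 0}" by (auto simp: Fq_iff)
  have "q * q ^ (m - 1) = card (UNIV :: 'a set)" using m_pos card_UNIV_eq by (simp flip: power_Suc)
  also have "\<dots> = card (range (\<lambda>x::'a. x ^ q - x)) * card Fq"
    unfolding Fq_eq
    by (rule card_eq_card_image_mult_card_kernel) (auto simp: frobenius_q_diff[of _ _ 1, simplified])
  also have "\<dots> \<le> q ^ (m - 1) * card Fq" by (intro mult_right_mono card_range_power_q_minus_le) simp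
  finally have "q \<le> card Fq" using q_ge_2 by (simp add: mult.commute)
  thus ?thesis using card_Fq_le by simp
qed

end

section \<open>Vector spaces over a finite subfield\<close>

definition sumset :: "'v::ab_group_add set \<Rightarrow> 'v set \<Rightarrow> 'v set" where
  "sumset A B = {a + b | a b. a \<in> A \<and> b \<in> B}"

lemma sumset_commute: "sumset A B = sumset B A"
proof -
  have "sumset X Y \<subseteq> sumset Y X" for X Y :: "'v::ab_group_add set"
    unfolding sumset_def by (force simp: add.commute)
  thus ?thesis by blast
qed

text \<open>The scalars form a subset \<open>K\<close> of a field type rather than a type of their own,
  so the library's \<open>vector_space\<close> locale does not apply; spans and dimensions are
  computed along lists.\<close>

locale subfield_space =
  fixes K :: "'a::field set" and q :: nat and scale :: "'a \<Rightarrow> 'v::ab_group_add \<Rightarrow> 'v"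
  assumes K_zero: "0 \<in> K" and K_one: "1 \<in> K"
    and K_add: "a \<in> K \<Longrightarrow> b \<in> K \<Longrightarrow> a + b \<in> K"
    and K_uminus: "a \<in> K \<Longrightarrow> - a \<in> K"
    and K_mult: "a \<in> K \<Longrightarrow> b \<in> K \<Longrightarrow> a * b \<in> K"
    and K_inverse: "a \<in> K \<Longrightarrow> inverse a \<in> K"
    and finite_K: "finite K" and card_K: "card K = q"
    and scale_add_right: "scale a (x + y) = scale a x + scale a y"
    and scale_add_left: "scale (a + b) x = scale a x + scale b x"
    and scale_scale: "scale a (scale b x) = scale (a * b) x"
    and scale_one: "scale 1 x = x"
begin

lemma K_diff: assumes "a \<in> K" "b \<in> K" shows "a - b \<in> K"
proof -
  have "a + - b \<in> K" by (rule K_add[OF assms(1) K_uminus[OF assms(2)]])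
  thus ?thesis by (simp only: diff_conv_add_uminus)
qed

lemma q_ge_2: "q \<ge> 2"
proof -
  have "{0, 1} \<subseteq> K" using K_zero K_one by auto
  hence "card {0::'a, 1} \<le> card K" using finite_K by (intro card_mono) auto
  thus ?thesis using card_K by simp
qed

lemma scale_zero_left [simp]: "scale 0 x = 0"
  using scale_add_left[of 0 0 x] by simp
lemma scale_zero_right [simp]: "scale a 0 = 0"
  using scale_add_right[of a 0 0] by simp
lemma scale_minus_left: "scale (- a) x = - scale a x"
proof -
  have "scale a x + scale (- a) x = 0" using scale_add_left[of a "- a" x] by simp
  hence "- scale a x = scale (- a) x" by (rule add.inverse_unique)
  thus ?thesis by simp
qed
lemma scale_minus_right: "scale a (- x) = - scale a x"
proof -
  have "scale a x + scale a (- x) = 0" using scale_add_right[of a x "- x"] by simp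
  hence "- scale a x = scale a (- x)" by (rule add.inverse_unique)
  thus ?thesis by simp
qed
lemma scale_diff_left: "scale (a - b) x = scale a x - scale b x"
  by (simp only: diff_conv_add_uminus scale_add_left scale_minus_left)

definition is_subspace :: "'v set \<Rightarrow> bool" where
  "is_subspace S \<longleftrightarrow> 0 \<in> S \<and> (\<forall>x\<in>S. \<forall>y\<in>S. x + y \<in> S) \<and> (\<forall>a\<in>K. \<forall>x\<in>S. scale a x \<in> S)"

lemma is_subspaceD:
  assumes "is_subspace S"
  shows "0 \<in> S" "x \<in> S \<Longrightarrow> y \<in> S \<Longrightarrow> x + y \<in> S" "a \<in> K \<Longrightarrow> x \<in> S \<Longrightarrow> scale a x \<in> S"
  using assms unfolding is_subspace_def by auto

lemma subspace_uminus: "is_subspace S \<Longrightarrow> x \<in> S \<Longrightarrow> - x \<in> S"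
  using is_subspaceD(3)[of S "- 1" x] K_uminus[OF K_one] by (simp add: scale_minus_left scale_one)

lemma subspace_diff: "is_subspace S \<Longrightarrow> x \<in> S \<Longrightarrow> y \<in> S \<Longrightarrow> x - y \<in> S"
  using is_subspaceD(2)[OF _ _ subspace_uminus] by (simp only: diff_conv_add_uminus)

lemma subspace_sum: "is_subspace S \<Longrightarrow> (\<And>i. i \<in> I \<Longrightarrow> f i \<in> S) \<Longrightarrow> sum f I \<in> S"
  by (induction I rule: infinite_finite_induct) (auto simp: is_subspaceD)

lemma subspace_UNIV: "is_subspace UNIV" by (simp add: is_subspace_def)

definition adjoin :: "'v set \<Rightarrow> 'v \<Rightarrow> 'v set" where
  "adjoin S x = {scale a x + y | a y. a \<in> K \<and> y \<in> S}"

lemma adjoin_subspace: assumes "is_subspace S" shows "is_subspace (adjoin S x)"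
  unfolding is_subspace_def
proof (intro conjI ballI)
  show "0 \<in> adjoin S x" unfolding adjoin_def using K_zero is_subspaceD(1)[OF assms]
    by (intro CollectI exI[of _ 0] exI[of _ "0::'v"]) simp
next
  fix y z assume "y \<in> adjoin S x" "z \<in> adjoin S x"
  then obtain a b y' z' where "a \<in> K" "b \<in> K" "y' \<in> S" "z' \<in> S" "y = scale a x + y'" "z = scale b x + z'"
    unfolding adjoin_def by auto
  thus "y + z \<in> adjoin S x" unfolding adjoin_def using K_add is_subspaceD(2)[OF assms]
    by (intro CollectI exI[of _ "a + b"] exI[of _ "y' + z'"]) (auto simp: scale_add_left algebra_simps)
next
  fix c y assume "c \<in> K" "y \<in> adjoin S x"
  then obtain a y' where "a \<in> K" "y' \<in> S" "y = scale a x + y'" unfolding adjoin_def by auto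
  thus "scale c y \<in> adjoin S x" unfolding adjoin_def using K_mult \<open>c \<in> K\<close> is_subspaceD(3)[OF assms]
    by (intro CollectI exI[of _ "c * a"] exI[of _ "scale c y'"]) (auto simp: scale_add_right scale_scale)
qed

lemma subset_adjoin: "S \<subseteq> adjoin S x"
  unfolding adjoin_def using K_zero by force

lemma adjoin_mem: "is_subspace S \<Longrightarrow> x \<in> adjoin S x"
  unfolding adjoin_def using K_one is_subspaceD(1)[of S] by (force simp: scale_one)

lemma adjoin_least: "is_subspace T \<Longrightarrow> S \<subseteq> T \<Longrightarrow> x \<in> T \<Longrightarrow> adjoin S x \<subseteq> T"
  unfolding adjoin_def using is_subspaceD[of T] by auto

lemma adjoin_eq: "is_subspace S \<Longrightarrow> x \<in> S \<Longrightarrow> adjoin S x = S"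
  using adjoin_least[of S S x] subset_adjoin[of S x] by auto

lemma adjoin_eq_image: "adjoin S x = (\<lambda>(a, y). scale a x + y) ` (K \<times> S)"
  unfolding adjoin_def by auto

lemma finite_adjoin: "finite S \<Longrightarrow> finite (adjoin S x)"
  unfolding adjoin_eq_image using finite_K by simp

lemma card_adjoin:
  assumes S: "is_subspace S" "finite S" and x: "x \<notin> S"
  shows "card (adjoin S x) = q * card S"
proof -
  have "inj_on (\<lambda>(a, y). scale a x + y) (K \<times> S)"
  proof (rule inj_onI, clarify)
    fix a y b z assume ab: "a \<in> K" "y \<in> S" "b \<in> K" "z \<in> S" and eq: "scale a x + y = scale b x + z"
    have "scale (a - b) x = z - y" using eq by (simp add: scale_diff_left algebra_simps)
    show "a = b \<and> y = z"
    proof (cases "a = b")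
      case True thus ?thesis using eq by simp
    next
      case False
      have "z - y \<in> S" using subspace_diff[OF S(1)] ab by simp
      hence "scale (inverse (a - b)) (scale (a - b) x) \<in> S"
        using is_subspaceD(3)[OF S(1) K_inverse[OF K_diff[OF ab(1,3)]]] \<open>scale (a - b) x = z - y\<close> by simp
      hence "x \<in> S" using False by (simp add: scale_scale scale_one)
      thus ?thesis using x by simp
    qed
  qed
  thus ?thesis unfolding adjoin_eq_image using card_K finite_K S(2)
    by (simp add: card_image card_cartesian_product)
qed

lemma sumset_adjoin: "sumset S (adjoin T x) = adjoin (sumset S T) x"
proof (rule equalityI; rule subsetI)
  fix z assume "z \<in> sumset S (adjoin T x)"
  then obtain s a t where st: "s \<in> S" "a \<in> K" "t \<in> T" "z = s + (scale a x + t)"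
    unfolding sumset_def adjoin_def by blast
  have "s + t \<in> sumset S T" using st unfolding sumset_def by blast
  moreover have "z = scale a x + (s + t)" using st by (simp add: algebra_simps)
  ultimately show "z \<in> adjoin (sumset S T) x" unfolding adjoin_def using st(2) by blast
next
  fix z assume "z \<in> adjoin (sumset S T) x"
  then obtain s a t where st: "s \<in> S" "a \<in> K" "t \<in> T" "z = scale a x + (s + t)"
    unfolding sumset_def adjoin_def by blast
  have "scale a x + t \<in> adjoin T x" using st unfolding adjoin_def by blast
  moreover have "z = s + (scale a x + t)" using st by (simp add: algebra_simps)
  ultimately show "z \<in> sumset S (adjoin T x)" unfolding sumset_def using st(1) by blast
qed

primrec span_list :: "'v list \<Rightarrow> 'v set" where
  "span_list [] = {0}"
| "span_list (x # xs) = adjoin (span_list xs) x"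

primrec dim_list :: "'v list \<Rightarrow> nat" where
  "dim_list [] = 0"
| "dim_list (x # xs) = (if x \<in> span_list xs then dim_list xs else Suc (dim_list xs))"

lemma span_list_subspace: "is_subspace (span_list xs)"
proof (induction xs)
  case Nil show ?case by (simp add: is_subspace_def)
next
  case (Cons x xs) thus ?case by (simp add: adjoin_subspace)
qed

lemma finite_span_list: "finite (span_list xs)"
  by (induction xs) (auto simp: finite_adjoin)

lemma card_span_list: "card (span_list xs) = q ^ dim_list xs"
  by (induction xs) (auto simp: adjoin_eq span_list_subspace card_adjoin finite_span_list)

lemma dim_list_le_length: "dim_list xs \<le> length xs"
  by (induction xs) auto

lemma set_subset_span_list: "set xs \<subseteq> span_list xs"
  by (induction xs) (use subset_adjoin adjoin_mem span_list_subspace in auto)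

lemma span_list_least: "is_subspace T \<Longrightarrow> set xs \<subseteq> T \<Longrightarrow> span_list xs \<subseteq> T"
proof (induction xs)
  case Nil thus ?case by (simp add: is_subspaceD(1))
next
  case (Cons x xs) thus ?case by (simp add: adjoin_least)
qed

lemma span_list_append: "span_list (xs @ ys) = sumset (span_list xs) (span_list ys)"
proof (induction xs)
  case Nil thus ?case by (simp add: sumset_def)
next
  case (Cons x xs)
  have "span_list ((x # xs) @ ys) = adjoin (sumset (span_list xs) (span_list ys)) x" by (simp add: Cons)
  also have "\<dots> = sumset (adjoin (span_list xs) x) (span_list ys)"
    using sumset_adjoin[of "span_list ys" "span_list xs" x] by (simp add: sumset_commute)
  finally show ?case by simp
qed

lemma dim_list_append_le: "dim_list (xs @ ys) \<le> length xs + dim_list ys"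
  by (induction xs) auto

lemma dim_list_append_le_add: "dim_list (xs @ ys) \<le> dim_list xs + dim_list ys"
proof -
  have "q ^ dim_list (xs @ ys) = card (sumset (span_list xs) (span_list ys))"
    using card_span_list[of "xs @ ys"] span_list_append[of xs ys] by simp
  also have "sumset (span_list xs) (span_list ys) = (\<lambda>(a, b). a + b) ` (span_list xs \<times> span_list ys)"
    unfolding sumset_def by auto
  also have "card \<dots> \<le> card (span_list xs \<times> span_list ys)" by (intro card_image_le) (simp add: finite_span_list)
  also have "\<dots> = q ^ (dim_list xs + dim_list ys)" by (simp add: card_cartesian_product card_span_list power_add)
  finally show ?thesis using q_ge_2 by (simp add: power_le_imp_le_exp)
qed

lemma dim_list_drop: "dim_list xs = length xs \<Longrightarrow> dim_list (drop i xs) = length (drop i xs)"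
  using dim_list_append_le[of "take i xs" "drop i xs"] dim_list_le_length[of "drop i xs"] by simp

lemma extend_to_basis:
  assumes S: "is_subspace S" "finite S" and hs: "set hs \<subseteq> S" "dim_list hs = length hs"
  shows "\<exists>xs. set xs \<subseteq> S \<and> dim_list (xs @ hs) = length (xs @ hs) \<and> span_list (xs @ hs) = S"
  using hs
proof (induction "card S - card (span_list hs)" arbitrary: hs rule: less_induct)
  case less
  have sub: "span_list hs \<subseteq> S" using span_list_least[OF S(1) less.prems(1)] .
  show ?case
  proof (cases "span_list hs = S")
    case True thus ?thesis using less.prems by (intro exI[of _ "[]"]) auto
  next
    case False
    then obtain x where x: "x \<in> S" "x \<notin> span_list hs" using sub by auto
    have d: "dim_list (x # hs) = length (x # hs)" using x less.prems by simp
    have c: "card (span_list (x # hs)) = q * card (span_list hs)"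
      using card_adjoin[OF span_list_subspace finite_span_list x(2)] by simp
    have pos: "card (span_list hs) > 0" using card_span_list q_ge_2 by simp
    have "card (span_list (x # hs)) \<le> card S"
      using span_list_least[OF S(1), of "x # hs"] x less.prems S(2) by (intro card_mono) auto
    moreover have "card (span_list hs) < q * card (span_list hs)"
      using mult_strict_right_mono[of 1 q "card (span_list hs)"] pos q_ge_2 by simp
    ultimately have lt: "card S - card (span_list (x # hs)) < card S - card (span_list hs)"
      using c by (intro diff_less_mono2) linarith+
    obtain xs where xs: "set xs \<subseteq> S" "dim_list (xs @ x # hs) = length (xs @ x # hs)" "span_list (xs @ x # hs) = S"
      using less.hyps[OF lt] x less.prems d by force
    thus ?thesis using set_subset_span_list[of "xs @ x # hs"] by (intro exI[of _ "xs @ [x]"]) auto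
  qed
qed

lemma exists_basis:
  assumes "is_subspace S" "finite S"
  shows "\<exists>hs. set hs \<subseteq> S \<and> dim_list hs = length hs \<and> span_list hs = S"
  using extend_to_basis[OF assms, of "[]"] by auto

lemma card_independent_lists:
  assumes S: "is_subspace S" "finite S" "card S = q ^ s"
  shows "card {g. length g = w \<and> set g \<subseteq> S \<and> dim_list g = w} = (\<Prod>i<w. q ^ s - q ^ i)"
proof (induction w)
  case 0
  have "{g. length g = 0 \<and> set g \<subseteq> S \<and> dim_list g = 0} = {[]}" by auto
  thus ?case by simp
next
  case (Suc w)
  let ?G = "\<lambda>w. {g. length g = w \<and> set g \<subseteq> S \<and> dim_list g = w}"
  have eq: "?G (Suc w) = (\<lambda>(g, x). x # g) ` (SIGMA g:?G w. S - span_list g)"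
  proof (rule Set.set_eqI)
    fix h show "h \<in> ?G (Suc w) \<longleftrightarrow> h \<in> (\<lambda>(g, x). x # g) ` (SIGMA g:?G w. S - span_list g)"
    proof
      assume h: "h \<in> ?G (Suc w)"
      then obtain x g where hg: "h = x # g" by (cases h) auto
      have "dim_list g \<le> w" using h hg dim_list_le_length[of g] by simp
      hence "x \<notin> span_list g \<and> dim_list g = w" using h hg by (auto split: if_splits)
      thus "h \<in> (\<lambda>(g, x). x # g) ` (SIGMA g:?G w. S - span_list g)"
        using h hg by (intro image_eqI[of _ _ "(g, x)"]) auto
    qed auto
  qed
  have inj: "inj_on (\<lambda>(g, x). x # g) (SIGMA g:?G w. S - span_list g)" by (auto simp: inj_on_def)
  have fin: "finite (?G w)"
  proof -
    have "?G w \<subseteq> {g. set g \<subseteq> S \<and> length g = w}" by auto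
    thus ?thesis using finite_lists_length_eq[OF S(2)] finite_subset by blast
  qed
  have cd: "card (S - span_list g) = q ^ s - q ^ w" if "g \<in> ?G w" for g
  proof -
    have "span_list g \<subseteq> S" using span_list_least[OF S(1)] that by auto
    thus ?thesis using that S(3) card_span_list[of g] by (simp add: card_Diff_subset finite_span_list)
  qed
  have "card (?G (Suc w)) = card (SIGMA g:?G w. S - span_list g)"
    unfolding eq using inj by (simp add: card_image)
  also have "\<dots> = (\<Sum>g\<in>?G w. card (S - span_list g))" using fin S(2) by (simp add: card_SigmaI)
  also have "\<dots> = (\<Sum>g\<in>?G w. q ^ s - q ^ w)" using cd by simp
  also have "\<dots> = card (?G w) * (q ^ s - q ^ w)" by simp
  finally show ?case using Suc by simp
qed

lemma span_list_replicate_0: "span_list (replicate k 0) = {0}"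
  by (induction k) (auto simp: adjoin_eq span_list_subspace[of "[]", simplified])

lemma span_list_map_uminus: "span_list (map uminus xs) = span_list xs"
proof (induction xs)
  case (Cons x xs)
  have "adjoin S (- x) = adjoin S x" for S
  proof (rule equalityI; rule subsetI)
    fix z assume "z \<in> adjoin S (- x)"
    then obtain a y where ay: "a \<in> K" "y \<in> S" "z = scale a (- x) + y" unfolding adjoin_def by blast
    have "z = scale (- a) x + y" using ay by (simp add: scale_minus_right scale_minus_left)
    thus "z \<in> adjoin S x" unfolding adjoin_def using ay K_uminus by blast
  next
    fix z assume "z \<in> adjoin S x"
    then obtain a y where ay: "a \<in> K" "y \<in> S" "z = scale a x + y" unfolding adjoin_def by blast
    have "z = scale (- a) (- x) + y" using ay by (simp add: scale_minus_right scale_minus_left)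
    thus "z \<in> adjoin S (- x)" unfolding adjoin_def using ay K_uminus by blast
  qed
  thus ?case using Cons by simp
qed simp

lemma q_power_inject: "q ^ a = q ^ b \<Longrightarrow> a = b"
  using q_ge_2 by (simp add: power_inject_exp)

lemma q_power_le_iff: "q ^ a \<le> q ^ b \<longleftrightarrow> a \<le> b"
  using q_ge_2 by (simp add: power_increasing_iff)

lemma dim_list_map_uminus: "dim_list (map uminus xs) = dim_list xs"
  using card_span_list[of xs] card_span_list[of "map uminus xs"] span_list_map_uminus[of xs] q_power_inject by metis

lemma span_list_append_replicate_0: "span_list (xs @ replicate k 0) = span_list xs"
  by (simp add: span_list_append span_list_replicate_0 sumset_def)

lemma dim_list_append_replicate_0: "dim_list (xs @ replicate k 0) = dim_list xs"
  using card_span_list[of xs] card_span_list[of "xs @ replicate k 0"] span_list_append_replicate_0[of xs k] q_power_inject by metis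
end

section \<open>Rank as a dimension over \<open>GF(q)\<close>\<close>

context gf_extension begin

sublocale A: subfield_space Fq q "(*) :: 'a \<Rightarrow> 'a \<Rightarrow> 'a"
  by unfold_locales
    (auto simp: Fq_zero Fq_one Fq_add Fq_uminus Fq_mult Fq_inverse card_Fq algebra_simps)

sublocale V: subfield_space Fq q "\<lambda>a (f :: nat \<Rightarrow> 'a) j. a * f j"
  by unfold_locales
    (auto simp: Fq_zero Fq_one Fq_add Fq_uminus Fq_mult Fq_inverse card_Fq algebra_simps plus_fun_def)

lemma span_list_snoc: "A.span_list (xs @ [x]) = A.adjoin (A.span_list xs) x"
proof -
  have "A.span_list (xs @ [x]) = sumset (A.span_list xs) (A.adjoin {0} x)" by (simp add: A.span_list_append)
  also have "\<dots> = A.adjoin (sumset (A.span_list xs) {0}) x" by (rule A.sumset_adjoin)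
  also have "sumset (A.span_list xs) {0} = A.span_list xs" by (auto simp: sumset_def)
  finally show ?thesis .
qed

lemma card_le_dim_list_if_indep_over:
  assumes J: "J \<subseteq> {0..<length xs}" and ind: "indep_over Fq (nth xs) J"
  shows "card J \<le> A.dim_list xs"
proof -
  have finJ: "finite J" using J finite_subset by blast
  define PJ where "PJ = PiE J (\<lambda>_. Fq)"
  define f where "f c = (\<Sum>j\<in>J. c j * xs ! j)" for c
  have img: "f ` PJ \<subseteq> A.span_list xs"
  proof
    fix y assume "y \<in> f ` PJ"
    then obtain c where c: "c \<in> PJ" "y = f c" by auto
    have "c j * xs ! j \<in> A.span_list xs" if "j \<in> J" for j
    proof -
      have "xs ! j \<in> A.span_list xs" using J that A.set_subset_span_list nth_mem by fastforce
      thus ?thesis using A.is_subspaceD(3)[OF A.span_list_subspace] c that unfolding PJ_def by auto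
    qed
    hence "(\<Sum>j\<in>J. c j * xs ! j) \<in> A.span_list xs" by (rule A.subspace_sum[OF A.span_list_subspace])
    thus "y \<in> A.span_list xs" using c by (simp add: f_def)
  qed
  have inj: "inj_on f PJ"
  proof (rule inj_onI)
    fix c c' assume c: "c \<in> PJ" "c' \<in> PJ" "f c = f c'"
    have "(\<Sum>j\<in>J. (c j - c' j) * xs ! j) = 0"
      using c(3) by (simp add: f_def left_diff_distrib sum_subtractf)
    moreover have "\<forall>j\<in>J. c j - c' j \<in> Fq" using c(1,2) Fq_diff unfolding PJ_def by auto
    moreover have "(\<forall>j\<in>J. c j - c' j \<in> Fq) \<longrightarrow> (\<Sum>j\<in>J. (c j - c' j) * xs ! j) = 0 \<longrightarrow> (\<forall>j\<in>J. c j - c' j = 0)"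
      using spec[OF ind[unfolded indep_over_def], of "\<lambda>j. c j - c' j"] by simp
    ultimately have "\<forall>j\<in>J. c j - c' j = 0" by blast
    thus "c = c'" using c(1,2) unfolding PJ_def by (intro PiE_ext) auto
  qed
  have "q ^ card J = card PJ" unfolding PJ_def using finJ by (simp add: card_PiE card_Fq)
  also have "\<dots> = card (f ` PJ)" using inj by (simp add: card_image)
  also have "\<dots> \<le> card (A.span_list xs)" using img A.finite_span_list by (intro card_mono) auto
  also have "\<dots> = q ^ A.dim_list xs" by (rule A.card_span_list)
  finally show ?thesis using A.q_power_le_iff by simp
qed

lemma indep_over_snoc:
  assumes J: "J \<subseteq> {0..<length xs}" "indep_over Fq (nth xs) J" and x: "x \<notin> A.span_list xs"
  shows "indep_over Fq (nth (xs @ [x])) (insert (length xs) J)"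
  unfolding indep_over_def
proof (intro allI impI)
  let ?n = "length xs"
  fix c assume c: "\<forall>j\<in>insert ?n J. c j \<in> Fq" and s: "(\<Sum>j\<in>insert ?n J. c j * (xs @ [x]) ! j) = 0"
  have finJ: "finite J" using J(1) finite_subset by blast
  have nth_eq: "(xs @ [x]) ! j = xs ! j" if "j \<in> J" for j using J(1) that by (auto simp: nth_append)
  have "?n \<notin> J" using J(1) by auto
  hence s2: "c ?n * x + (\<Sum>j\<in>J. c j * xs ! j) = 0" using s finJ nth_eq by simp
  have inS: "(\<Sum>j\<in>J. c j * xs ! j) \<in> A.span_list xs"
  proof (rule A.subspace_sum[OF A.span_list_subspace])
    fix j assume "j \<in> J"
    hence "xs ! j \<in> A.span_list xs" using J(1) A.set_subset_span_list nth_mem by fastforce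
    thus "c j * xs ! j \<in> A.span_list xs" using A.is_subspaceD(3)[OF A.span_list_subspace] c \<open>j \<in> J\<close> by auto
  qed
  have cn: "c ?n = 0"
  proof (rule ccontr)
    assume "c ?n \<noteq> 0"
    hence "x = (- inverse (c ?n)) * (\<Sum>j\<in>J. c j * xs ! j)"
      using s2 by (simp add: field_simps add_eq_0_iff)
    also have "\<dots> \<in> A.span_list xs"
      by (rule A.is_subspaceD(3)[OF A.span_list_subspace _ inS]) (use c Fq_uminus Fq_inverse in auto)
    finally show False using x by simp
  qed
  hence "\<forall>j\<in>J. c j = 0" using s2 J(2) c unfolding indep_over_def by auto
  thus "\<forall>j\<in>insert ?n J. c j = 0" using cn by auto
qed

lemma exists_indep_over_subset:
  "\<exists>J. J \<subseteq> {0..<length xs} \<and> indep_over Fq (nth xs) J \<and> q ^ card J = card (A.span_list xs)"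
proof (induction xs rule: rev_induct)
  case Nil thus ?case by (intro exI[of _ "{}"]) (simp add: indep_over_def)
next
  case (snoc x xs)
  then obtain J where J: "J \<subseteq> {0..<length xs}" "indep_over Fq (nth xs) J"
    "q ^ card J = card (A.span_list xs)"
    by blast
  show ?case
  proof (cases "x \<in> A.span_list xs")
    case True
    have "(xs @ [x]) ! j = xs ! j" if "j \<in> J" for j using J(1) that by (auto simp: nth_append)
    hence "indep_over Fq (nth (xs @ [x])) J"
      using J(2) unfolding indep_over_def by (simp cong: sum.cong)
    moreover have "A.span_list (xs @ [x]) = A.span_list xs"
      using True by (simp add: span_list_snoc A.adjoin_eq A.span_list_subspace)
    ultimately show ?thesis using J by (intro exI[of _ J]) auto
  next
    case False
    have "card (A.span_list (xs @ [x])) = q * card (A.span_list xs)"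
      using A.card_adjoin[OF A.span_list_subspace A.finite_span_list False] by (simp add: span_list_snoc)
    moreover have "finite J" "length xs \<notin> J" using J(1) finite_subset by auto
    ultimately show ?thesis using J indep_over_snoc[OF J(1,2) False]
      by (intro exI[of _ "insert (length xs) J"]) auto
  qed
qed

lemma rk_eq_dim_list: "rk Fq xs = A.dim_list xs"
proof -
  let ?S = "{card J | J. J \<subseteq> {0..<length xs} \<and> indep_over Fq (nth xs) J}"
  have fin: "finite ?S"
  proof -
    have "?S \<subseteq> card ` Pow {0..<length xs}" by auto
    thus ?thesis using finite_subset by blast
  qed
  obtain J where J: "J \<subseteq> {0..<length xs}" "indep_over Fq (nth xs) J" "q ^ card J = card (A.span_list xs)"
    using exists_indep_over_subset by blast
  have cJ: "card J = A.dim_list xs" using J(3) A.card_span_list A.q_power_inject by metis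
  have mem: "A.dim_list xs \<in> ?S" unfolding mem_Collect_eq using J cJ by (intro exI[of _ J]) simp
  have "Max ?S = A.dim_list xs"
    by (rule Max_eqI[OF fin]) (use card_le_dim_list_if_indep_over mem in auto)
  thus ?thesis unfolding rk_def by simp
qed

lemma card_span_list_eq_rk: "card (A.span_list xs) = q ^ rk Fq xs"
  by (simp add: rk_eq_dim_list A.card_span_list)

lemma rk_le_length: "rk Fq xs \<le> length xs"
  by (simp add: rk_eq_dim_list A.dim_list_le_length)

lemma rk_append_le: "rk Fq (xs @ ys) \<le> rk Fq xs + rk Fq ys"
  by (simp add: rk_eq_dim_list A.dim_list_append_le_add)

lemma rk_append_replicate_0: "rk Fq (xs @ replicate k 0) = rk Fq xs"
  by (simp add: rk_eq_dim_list A.dim_list_append_replicate_0)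

lemma rk_map_uminus: "rk Fq (map uminus xs) = rk Fq xs"
  by (simp add: rk_eq_dim_list A.dim_list_map_uminus)

lemma rk_replicate_0: "rk Fq (replicate k 0) = 0"
  using card_span_list_eq_rk[of "replicate k 0"] A.q_power_inject[of _ 0]
  by (simp add: A.span_list_replicate_0)

section \<open>Relation spaces and changes of basis\<close>

text \<open>\<open>GF(q)\<^sup>n\<close> is modelled by the functions \<open>nat \<Rightarrow> GF(q)\<close> vanishing from \<open>n\<close> on.
  For \<open>y \<in> GF(q\<^sup>m)\<^sup>n\<close>, \<open>comb y f = \<Sum> f\<^sub>j y\<^sub>j\<close>, so \<open>relations y\<close> is the right kernel of the
  expansion matrix of \<open>y\<close>, and for a list \<open>hs\<close> of such functions \<open>transform hs y\<close> is
  \<open>y\<close> multiplied by the \<open>GF(q)\<close>-matrix with columns \<open>hs\<close>.\<close>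

definition Fq_vecs :: "nat \<Rightarrow> (nat \<Rightarrow> 'a) set" where
  "Fq_vecs n = {f. (\<forall>j. f j \<in> Fq) \<and> (\<forall>j\<ge>n. f j = 0)}"

definition comb :: "'a list \<Rightarrow> (nat \<Rightarrow> 'a) \<Rightarrow> 'a" where
  "comb y f = (\<Sum>j<length y. f j * y ! j)"

definition relations :: "'a list \<Rightarrow> (nat \<Rightarrow> 'a) set" where
  "relations y = {f \<in> Fq_vecs (length y). comb y f = 0}"

definition vecs :: "nat \<Rightarrow> 'a list set" where
  "vecs n = {x. length x = n}"

definition transform :: "(nat \<Rightarrow> 'a) list \<Rightarrow> 'a list \<Rightarrow> 'a list" where
  "transform hs y = map (comb y) hs"

definition is_basis :: "nat \<Rightarrow> (nat \<Rightarrow> 'a) list \<Rightarrow> bool" where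
  "is_basis n hs \<longleftrightarrow> set hs \<subseteq> Fq_vecs n \<and> V.dim_list hs = length hs \<and> V.span_list hs = Fq_vecs n"

lemma finite_vecs: "finite (vecs n)"
  using finite_lists_length_eq[of "UNIV :: 'a set" n] by (simp add: vecs_def)

lemma card_vecs: "card (vecs n) = (q ^ m) ^ n"
  using card_lists_length_eq[of "UNIV :: 'a set" n] card_UNIV_eq by (simp add: vecs_def)

lemma card_vecs_Suc: "card {g \<in> vecs (Suc u). P g} = (\<Sum>x\<in>UNIV. card {g \<in> vecs u. P (x # g)})"
proof -
  have "{g \<in> vecs (Suc u). P g} = (\<lambda>(x, g). x # g) ` (SIGMA x:UNIV. {g \<in> vecs u. P (x # g)})"
  proof (intro equalityI subsetI)
    fix g assume "g \<in> {g \<in> vecs (Suc u). P g}"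
    then obtain x g' where "g = x # g'" "length g' = u" "P (x # g')" by (cases g) (auto simp: vecs_def)
    thus "g \<in> (\<lambda>(x, g). x # g) ` (SIGMA x:UNIV. {g \<in> vecs u. P (x # g)})"
      by (intro image_eqI[of _ _ "(x, g')"]) (auto simp: vecs_def)
  qed (auto simp: vecs_def)
  hence "card {g \<in> vecs (Suc u). P g} = card (SIGMA x:UNIV. {g \<in> vecs u. P (x # g)})"
    by (simp add: card_image inj_on_def)
  thus ?thesis using finite_vecs by (simp add: card_SigmaI)
qed

lemma card_vecs_add: "card {x \<in> vecs (u + d). P x} = (\<Sum>z\<in>vecs d. card {g \<in> vecs u. P (g @ z)})"
proof -
  let ?S = "SIGMA z:vecs d. {g \<in> vecs u. P (g @ z)}"
  have "(\<Sum>z\<in>vecs d. card {g \<in> vecs u. P (g @ z)}) = card ?S"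
    using finite_vecs by (simp add: card_SigmaI)
  also have "\<dots> = card ((\<lambda>(z, g). g @ z) ` ?S)"
    by (rule card_image[symmetric]) (auto simp: inj_on_def vecs_def)
  also have "(\<lambda>(z, g). g @ z) ` ?S = {x \<in> vecs (u + d). P x}"
  proof (intro equalityI subsetI)
    fix x assume "x \<in> {x \<in> vecs (u + d). P x}"
    thus "x \<in> (\<lambda>(z, g). g @ z) ` ?S"
      by (intro image_eqI[of _ _ "(drop u x, take u x)"]) (auto simp: vecs_def)
  qed (auto simp: vecs_def)
  finally show ?thesis by simp
qed

lemma Fq_vecs_subspace: "V.is_subspace (Fq_vecs n)"
  unfolding V.is_subspace_def Fq_vecs_def by (auto simp: Fq_zero Fq_add Fq_mult plus_fun_def)

lemma card_Fq_vecs: "card (Fq_vecs n) = q ^ n" and finite_Fq_vecs: "finite (Fq_vecs n)"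
proof -
  define LS where "LS = {xs. set xs \<subseteq> Fq \<and> length xs = n}"
  define g where "g f = map f [0..<n]" for f :: "nat \<Rightarrow> 'a"
  have inj: "inj_on g (Fq_vecs n)"
  proof (rule inj_onI)
    fix f f' assume f: "f \<in> Fq_vecs n" "f' \<in> Fq_vecs n" "g f = g f'"
    show "f = f'"
    proof
      fix j show "f j = f' j"
      proof (cases "j < n")
        case True
        have "\<forall>x\<in>{0..<n}. f x = f' x" using f(3) unfolding g_def by simp
        thus ?thesis using True by simp
      next
        case False thus ?thesis using f(1,2) unfolding Fq_vecs_def by auto
      qed
    qed
  qed
  have img: "g ` Fq_vecs n = LS"
  proof (rule equalityI; rule subsetI)
    fix xs assume "xs \<in> g ` Fq_vecs n" thus "xs \<in> LS" unfolding LS_def g_def Fq_vecs_def by auto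
  next
    fix xs assume xs: "xs \<in> LS"
    define f where "f j = (if j < n then xs ! j else 0)" for j
    have "f \<in> Fq_vecs n" using xs Fq_zero nth_mem unfolding f_def Fq_vecs_def LS_def by fastforce
    moreover have "g f = xs" using xs unfolding g_def f_def LS_def by (intro nth_equalityI) auto
    ultimately show "xs \<in> g ` Fq_vecs n" by blast
  qed
  have finLS: "finite LS" unfolding LS_def using finite_lists_length_eq[OF A.finite_K] by simp
  show "finite (Fq_vecs n)" using finite_imageD[of g "Fq_vecs n"] inj img finLS by simp
  have "card (Fq_vecs n) = card LS" using card_image[OF inj] img by simp
  also have "\<dots> = q ^ n" unfolding LS_def using card_lists_length_eq[OF A.finite_K, of n] card_Fq by simp
  finally show "card (Fq_vecs n) = q ^ n" .
qed

lemma comb_add: "comb y (f + g) = comb y f + comb y g"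
  by (simp add: comb_def sum.distrib distrib_right)

lemma comb_scale: "comb y (\<lambda>j. a * f j) = a * comb y f"
  by (simp add: comb_def sum_distrib_left mult.assoc)

lemma comb_zero: "comb y 0 = 0"
  by (simp add: comb_def)

lemma comb_diff: "comb y (f - g) = comb y f - comb y g"
  by (simp add: comb_def sum_subtractf left_diff_distrib)

lemma comb_Cons: "comb (x # y) f = f 0 * x + comb y (\<lambda>j. f (Suc j))"
  unfolding comb_def by (simp only: length_Cons sum.lessThan_Suc_shift) simp

lemma comb_image: "comb y ` Fq_vecs (length y) = A.span_list y"
proof (induction y)
  case Nil
  have "Fq_vecs 0 = {0}" unfolding Fq_vecs_def using Fq_zero by auto
  thus ?case by (simp add: comb_def)
next
  case (Cons x y)
  show ?case
  proof (rule equalityI; rule subsetI)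
    fix b assume "b \<in> comb (x # y) ` Fq_vecs (length (x # y))"
    then obtain f where f: "f \<in> Fq_vecs (Suc (length y))" "b = comb (x # y) f" by auto
    have "(\<lambda>j. f (Suc j)) \<in> Fq_vecs (length y)" using f(1) unfolding Fq_vecs_def by auto
    hence "comb y (\<lambda>j. f (Suc j)) \<in> A.span_list y" using Cons.IH by blast
    moreover have "f 0 \<in> Fq" using f(1) unfolding Fq_vecs_def by auto
    ultimately show "b \<in> A.span_list (x # y)" using f(2) unfolding comb_Cons by (auto simp: A.adjoin_def)
  next
    fix b assume "b \<in> A.span_list (x # y)"
    then obtain a z where az: "a \<in> Fq" "z \<in> A.span_list y" "b = a * x + z" by (auto simp: A.adjoin_def)
    then obtain g where g: "g \<in> Fq_vecs (length y)" "z = comb y g" using Cons.IH by blast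
    define f where "f j = (if j = 0 then a else g (j - 1))" for j
    have "f \<in> Fq_vecs (length (x # y))" using g(1) az(1) unfolding Fq_vecs_def f_def by auto
    moreover have "comb (x # y) f = b" using az g unfolding comb_Cons f_def by simp
    ultimately show "b \<in> comb (x # y) ` Fq_vecs (length (x # y))" by blast
  qed
qed

lemma relations_subspace: "V.is_subspace (relations y)"
  unfolding V.is_subspace_def relations_def
  using V.is_subspaceD[OF Fq_vecs_subspace] by (auto simp: comb_add comb_scale comb_zero)

lemma relations_subset: "relations y \<subseteq> Fq_vecs (length y)"
  unfolding relations_def by auto

lemma finite_relations: "finite (relations y)"
  using finite_subset[OF relations_subset finite_Fq_vecs] .

lemma card_relations: "card (relations y) = q ^ (length y - rk Fq y)"
proof -
  have "q ^ length y = card (Fq_vecs (length y))" by (simp add: card_Fq_vecs)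
  also have "\<dots> = card (comb y ` Fq_vecs (length y)) * card (relations y)"
    unfolding relations_def
    by (rule card_eq_card_image_mult_card_kernel)
      (auto simp: finite_Fq_vecs V.subspace_diff[OF Fq_vecs_subspace] comb_diff)
  also have "\<dots> = q ^ rk Fq y * card (relations y)" by (simp add: comb_image card_span_list_eq_rk)
  finally have "card (relations y) * q ^ rk Fq y = q ^ (length y - rk Fq y) * q ^ rk Fq y"
    using rk_le_length[of y] by (simp add: mult.commute flip: power_add)
  thus ?thesis using q_ge_2 by simp
qed

lemma card_relations_eq_iff:
  assumes "length z = d" "w \<le> d"
  shows "card (relations z) = q ^ (d - w) \<longleftrightarrow> rk Fq z = w"
proof
  assume "card (relations z) = q ^ (d - w)"
  hence "d - rk Fq z = d - w" using card_relations[of z] assms(1) A.q_power_inject by simp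
  thus "rk Fq z = w" using rk_le_length[of z] assms by simp
qed (use card_relations[of z] assms(1) in simp)

lemma rk_eq_if_relations_eq:
  assumes "length z = length z'" "relations z = relations z'"
  shows "rk Fq z = rk Fq z'"
  using card_relations_eq_iff[of z "length z'" "rk Fq z'"] card_relations[of z'] rk_le_length[of z'] assms
  by simp

lemma transform_append: "transform (hs2 @ hs1) ev = transform hs2 ev @ transform hs1 ev"
  by (simp add: transform_def)

lemma length_transform [simp]: "length (transform hs ev) = length hs"
  by (simp add: transform_def)

lemma comb_image_span_list: "comb ev ` V.span_list hs = A.span_list (map (comb ev) hs)"
proof (induction hs)
  case Nil thus ?case by (simp add: comb_def)
next
  case (Cons h hs)
  show ?case
  proof (rule equalityI; rule subsetI)
    fix b assume "b \<in> comb ev ` V.span_list (h # hs)"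
    then obtain a g where ag: "a \<in> Fq" "g \<in> V.span_list hs" "b = comb ev ((\<lambda>j. a * h j) + g)"
      by (auto simp: V.adjoin_def)
    have "b = a * comb ev h + comb ev g" using ag(3) by (simp add: comb_add comb_scale)
    thus "b \<in> A.span_list (map (comb ev) (h # hs))" using ag Cons.IH by (auto simp: A.adjoin_def)
  next
    fix b assume "b \<in> A.span_list (map (comb ev) (h # hs))"
    then obtain a z where az: "a \<in> Fq" "z \<in> A.span_list (map (comb ev) hs)" "b = a * comb ev h + z"
      by (auto simp: A.adjoin_def)
    then obtain g where g: "g \<in> V.span_list hs" "z = comb ev g" using Cons.IH by blast
    have "b = comb ev ((\<lambda>j. a * h j) + g)" using az g by (simp add: comb_add comb_scale)
    moreover have "(\<lambda>j. a * h j) + g \<in> V.span_list (h # hs)" using az(1) g(1) by (auto simp: V.adjoin_def)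
    ultimately show "b \<in> comb ev ` V.span_list (h # hs)" by blast
  qed
qed

lemma length_basis: assumes "is_basis n hs" shows "length hs = n"
proof -
  have "q ^ length hs = q ^ n"
    using V.card_span_list[of hs] card_Fq_vecs[of n] assms unfolding is_basis_def by simp
  thus ?thesis by (rule V.q_power_inject)
qed

lemma span_list_transform: assumes B: "is_basis n hs" and l: "length ev = n" shows "A.span_list (transform hs ev) = A.span_list ev"
proof -
  have "A.span_list (transform hs ev) = comb ev ` V.span_list hs" unfolding transform_def by (rule comb_image_span_list[symmetric])
  also have "V.span_list hs = Fq_vecs n" using B unfolding is_basis_def by simp
  also have "comb ev ` Fq_vecs n = A.span_list ev" using comb_image[of ev] l by simp
  finally show ?thesis .
qed

lemma rk_transform: assumes "is_basis n hs" "length ev = n" shows "rk Fq (transform hs ev) = rk Fq ev"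
proof -
  have "q ^ rk Fq (transform hs ev) = q ^ rk Fq ev"
    unfolding card_span_list_eq_rk[symmetric] using span_list_transform[OF assms] by simp
  thus ?thesis by (rule A.q_power_inject)
qed

lemma comb_vdiff: "length ev = length ev' \<Longrightarrow> comb (vdiff ev ev') f = comb ev f - comb ev' f"
  by (simp add: comb_def vdiff_def sum_subtractf right_diff_distrib)

lemma length_vdiff [simp]: "length (vdiff ev ev') = min (length ev) (length ev')"
  by (simp add: vdiff_def)

lemma nth_vdiff: "j < length ev \<Longrightarrow> j < length ev' \<Longrightarrow> vdiff ev ev' ! j = ev ! j - ev' ! j"
  by (simp add: vdiff_def)

lemma transform_vdiff:
  assumes "length y = length c"
  shows "transform hs (vdiff y c) = vdiff (transform hs y) (transform hs c)"
  using assms by (intro nth_equalityI) (auto simp: transform_def comb_vdiff nth_vdiff)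

lemma vdiff_replicate_0: "length z = d \<Longrightarrow> vdiff z (replicate d 0) = z"
  by (intro nth_equalityI) (auto simp: nth_vdiff)

lemma vdiff_replicate_0_left: "length z = d \<Longrightarrow> vdiff (replicate d 0) z = map uminus z"
  by (intro nth_equalityI) (auto simp: nth_vdiff)

lemma vdiff_self: "vdiff z z = replicate (length z) 0"
  by (intro nth_equalityI) (auto simp: nth_vdiff)

lemma transform_replicate_0: "transform hs (replicate n 0) = replicate (length hs) 0"
  by (intro nth_equalityI) (auto simp: transform_def comb_def)

lemma transform_inj:
  assumes "is_basis n hs" "length y = n" "length y' = n" "transform hs y = transform hs y'"
  shows "y = y'"
proof -
  have "transform hs (vdiff y y') = replicate (length hs) 0"
    using transform_vdiff[of y y' hs] assms(2-4) by (simp add: vdiff_self)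
  hence "A.span_list (vdiff y y') = {0}"
    using span_list_transform[OF assms(1), of "vdiff y y'"] assms(2,3) A.span_list_replicate_0 by simp
  hence "set (vdiff y y') \<subseteq> {0}" using A.set_subset_span_list by blast
  moreover have "vdiff y y' ! j \<in> set (vdiff y y')" if "j < n" for j
    using that assms(2,3) by (intro nth_mem) simp
  ultimately have "vdiff y y' ! j = 0" if "j < n" for j using that by blast
  thus ?thesis using assms(2,3) by (intro nth_equalityI) (auto simp: nth_vdiff)
qed

lemma transform_image_vecs:
  assumes "is_basis n hs"
  shows "transform hs ` vecs n = vecs n"
proof -
  have inj: "inj_on (transform hs) (vecs n)" using transform_inj[OF assms] by (auto simp: inj_on_def vecs_def)
  have sub: "transform hs ` vecs n \<subseteq> vecs n" using length_basis[OF assms] by (auto simp: vecs_def)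
  show ?thesis using card_image[OF inj] by (intro card_subset_eq[OF finite_vecs sub]) simp
qed

lemma transform_surj: assumes "is_basis n hs" "length z = n" shows "\<exists>ev. length ev = n \<and> transform hs ev = z"
proof -
  have "z \<in> transform hs ` vecs n" using transform_image_vecs[OF assms(1)] assms(2) by (simp add: vecs_def)
  thus ?thesis by (auto simp: vecs_def)
qed

lemma span_list_subset_relations_iff:
  assumes "set hs1 \<subseteq> Fq_vecs (length ev)"
  shows "V.span_list hs1 \<subseteq> relations ev \<longleftrightarrow> transform hs1 ev = replicate (length hs1) 0"
proof
  assume "V.span_list hs1 \<subseteq> relations ev"
  hence "\<forall>h\<in>set hs1. comb ev h = 0" using V.set_subset_span_list[of hs1] unfolding relations_def by auto
  thus "transform hs1 ev = replicate (length hs1) 0" unfolding transform_def by (intro nth_equalityI) auto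
next
  assume "transform hs1 ev = replicate (length hs1) 0"
  hence "\<forall>h\<in>set hs1. comb ev h = 0" unfolding transform_def by (simp add: map_eq_conv map_replicate_const[symmetric])
  hence "set hs1 \<subseteq> relations ev" using assms unfolding relations_def by auto
  thus "V.span_list hs1 \<subseteq> relations ev" using V.span_list_least[OF relations_subspace] by blast
qed

lemma exists_adapted_basis:
  assumes L: "V.is_subspace L" "L \<subseteq> Fq_vecs n"
  shows "\<exists>hs2 hs1. is_basis n (hs2 @ hs1) \<and> V.span_list hs1 = L \<and> set hs1 \<subseteq> L \<and> V.dim_list hs1 = length hs1"
proof -
  have finL: "finite L" using finite_subset[OF L(2) finite_Fq_vecs] .
  obtain hs1 where h1: "set hs1 \<subseteq> L" "V.dim_list hs1 = length hs1" "V.span_list hs1 = L"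
    using V.exists_basis[OF L(1) finL] by blast
  obtain hs2 where h2: "set hs2 \<subseteq> Fq_vecs n" "V.dim_list (hs2 @ hs1) = length (hs2 @ hs1)" "V.span_list (hs2 @ hs1) = Fq_vecs n"
    using V.extend_to_basis[OF Fq_vecs_subspace finite_Fq_vecs, of hs1] h1 L(2) by blast
  have "is_basis n (hs2 @ hs1)" unfolding is_basis_def using h1 h2 L(2) by auto
  thus ?thesis using h1 by blast
qed

lemma card_transform_fiber:
  assumes B: "is_basis n (hs2 @ hs1)" and z: "length z = length hs1"
  shows "card {x \<in> vecs n. transform hs1 x = z \<and> Q (transform hs2 x)}
    = card {g \<in> vecs (length hs2). Q g}" (is "card ?X = card ?G")
proof (rule bij_betw_same_card[of "transform hs2"], rule bij_betwI')
  fix x x' assume "x \<in> ?X" "x' \<in> ?X"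
  hence x: "length x = n" "length x' = n" "transform hs1 x = z" "transform hs1 x' = z"
    by (auto simp: vecs_def)
  show "(transform hs2 x = transform hs2 x') = (x = x')"
    using transform_inj[OF B x(1,2)] x(3,4) by (auto simp: transform_append)
next
  fix x assume "x \<in> ?X"
  thus "transform hs2 x \<in> ?G" by (simp add: vecs_def)
next
  fix g assume g: "g \<in> ?G"
  obtain x where x: "length x = n" "transform (hs2 @ hs1) x = g @ z"
    using transform_surj[OF B, of "g @ z"] g z length_basis[OF B] by (auto simp: vecs_def)
  hence "transform hs2 x = g" "transform hs1 x = z" using g by (simp_all add: transform_append vecs_def)
  thus "\<exists>x\<in>?X. g = transform hs2 x" using x(1) g by (auto simp: vecs_def)
qed

text \<open>Core of the Singleton bound: \<open>k\<close> independent relations of \<open>x\<close> force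
  \<open>rk x \<le> length x - k\<close>.\<close>

lemma rk_add_length_le_if_transform_eq_0:
  assumes "set ks \<subseteq> Fq_vecs (length x)" "V.dim_list ks = length ks"
    and "transform ks x = replicate (length ks) 0"
  shows "rk Fq x + length ks \<le> length x"
proof -
  have "V.span_list ks \<subseteq> relations x" using span_list_subset_relations_iff assms(1,3) by simp
  hence "card (V.span_list ks) \<le> card (relations x)" by (intro card_mono finite_relations)
  hence "q ^ length ks \<le> q ^ (length x - rk Fq x)"
    using V.card_span_list[of ks] assms(2) card_relations[of x] by simp
  thus ?thesis using A.q_power_le_iff rk_le_length[of x] by simp
qed

lemma rk_le_length_add_rk_transform:
  assumes "is_basis n (hs2 @ hs1)" "length x = n"
  shows "rk Fq x \<le> length hs2 + rk Fq (transform hs1 x)"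
  using rk_transform[OF assms] rk_append_le[of "transform hs2 x" "transform hs1 x"]
    rk_le_length[of "transform hs2 x"]
  by (simp add: transform_append)

section \<open>Counting words by rank and relation space\<close>

lemma card_full_rank_lists: "card {g \<in> vecs w. rk Fq g = w} = (\<Prod>i<w. q ^ m - q ^ i)"
  using A.card_independent_lists[OF A.subspace_UNIV finite card_UNIV_eq, of w]
  by (simp add: rk_eq_dim_list vecs_def)

lemma relations_eq_iff_transform:
  assumes B: "is_basis d (hs2 @ hs1)" "V.span_list hs1 = L" "set hs1 \<subseteq> Fq_vecs d"
    and L: "card L = q ^ (d - w)" "length hs1 = d - w" and w: "w \<le> d" and z: "length z = d"
  shows "relations z = L \<longleftrightarrow> transform hs1 z = replicate (d - w) 0 \<and> rk Fq (transform hs2 z) = w"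
proof -
  have rk_z: "rk Fq z = rk Fq (transform hs2 z @ transform hs1 z)"
    using rk_transform[OF B(1) z] by (simp add: transform_append)
  have sub_iff: "L \<subseteq> relations z \<longleftrightarrow> transform hs1 z = replicate (d - w) 0"
    using span_list_subset_relations_iff[of hs1 z] B(2,3) L(2) z by simp
  show ?thesis
  proof
    assume R: "relations z = L"
    hence "rk Fq z = w" using card_relations_eq_iff[OF z w] L(1) by simp
    thus "transform hs1 z = replicate (d - w) 0 \<and> rk Fq (transform hs2 z) = w"
      using sub_iff R rk_z by (simp add: rk_append_replicate_0)
  next
    assume H: "transform hs1 z = replicate (d - w) 0 \<and> rk Fq (transform hs2 z) = w"
    hence "card (relations z) = card L" using card_relations_eq_iff[OF z w] L(1) rk_z
      by (simp add: rk_append_replicate_0)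
    thus "relations z = L" using card_subset_eq[OF finite_relations] sub_iff H by metis
  qed
qed

lemma card_relations_eq:
  assumes L: "V.is_subspace L" "L \<subseteq> Fq_vecs d" "card L = q ^ (d - w)" and w: "w \<le> d"
  shows "card {z \<in> vecs d. relations z = L} = (\<Prod>i<w. q ^ m - q ^ i)"
proof -
  obtain hs2 hs1 where B: "is_basis d (hs2 @ hs1)" "V.span_list hs1 = L" "set hs1 \<subseteq> L"
    "V.dim_list hs1 = length hs1"
    using exists_adapted_basis[OF L(1,2)] by blast
  have l1: "length hs1 = d - w" using V.card_span_list[of hs1] B(2,4) L(3) V.q_power_inject by metis
  have l2: "length hs2 = w" using length_basis[OF B(1)] l1 w by simp
  have "{z \<in> vecs d. relations z = L}
      = {z \<in> vecs d. transform hs1 z = replicate (d - w) 0 \<and> rk Fq (transform hs2 z) = w}"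
    using relations_eq_iff_transform[OF B(1,2) _ L(3) l1 w] B(3) L(2) by (auto simp: vecs_def)
  also have "card \<dots> = card {g \<in> vecs w. rk Fq g = w}"
    using card_transform_fiber[OF B(1), of "replicate (d - w) 0"] l1 l2 by simp
  finally show ?thesis by (simp add: card_full_rank_lists)
qed

definition subspaces :: "nat \<Rightarrow> nat \<Rightarrow> (nat \<Rightarrow> 'a) set set" where
  "subspaces n j = {L. V.is_subspace L \<and> L \<subseteq> Fq_vecs n \<and> card L = q ^ j}"

lemma finite_subspaces: "finite (subspaces n j)"
proof -
  have "subspaces n j \<subseteq> Pow (Fq_vecs n)" unfolding subspaces_def by auto
  thus ?thesis using finite_Fq_vecs finite_subset by blast
qed

lemma relations_mem_subspaces: "relations y \<in> subspaces (length y) (length y - rk Fq y)"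
  unfolding subspaces_def using relations_subspace relations_subset card_relations by simp

lemma card_subspaces_mult: "card (subspaces n j) * (\<Prod>i<j. q ^ j - q ^ i) = (\<Prod>i<j. q ^ n - q ^ i)"
proof -
  define G where "G = {g. length g = j \<and> set g \<subseteq> Fq_vecs n \<and> V.dim_list g = j}"
  define GL where "GL L = {g. length g = j \<and> set g \<subseteq> L \<and> V.dim_list g = j}" for L
  have cG: "card G = (\<Prod>i<j. q ^ n - q ^ i)"
    unfolding G_def by (rule V.card_independent_lists[OF Fq_vecs_subspace finite_Fq_vecs card_Fq_vecs])
  have finG: "finite G"
  proof -
    have "G \<subseteq> {g. set g \<subseteq> Fq_vecs n \<and> length g = j}" unfolding G_def by auto
    thus ?thesis using finite_lists_length_eq[OF finite_Fq_vecs] finite_subset by blast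
  qed
  have img: "V.span_list ` G = subspaces n j"
  proof (rule equalityI; rule subsetI)
    fix L assume "L \<in> V.span_list ` G"
    then obtain g where g: "g \<in> G" "L = V.span_list g" by auto
    show "L \<in> subspaces n j" unfolding subspaces_def using g V.span_list_subspace V.span_list_least[OF Fq_vecs_subspace] V.card_span_list
      by (auto simp: G_def)
  next
    fix L assume L: "L \<in> subspaces n j"
    have finL: "finite L" using L finite_subset[OF _ finite_Fq_vecs] unfolding subspaces_def by blast
    obtain hs where hs: "set hs \<subseteq> L" "V.dim_list hs = length hs" "V.span_list hs = L"
      using V.exists_basis[of L] L finL unfolding subspaces_def by blast
    have "length hs = j" using V.card_span_list[of hs] hs L V.q_power_inject unfolding subspaces_def by fastforce
    hence "hs \<in> G" using hs L unfolding G_def subspaces_def by auto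
    thus "L \<in> V.span_list ` G" using hs by blast
  qed
  have fib: "{g \<in> G. V.span_list g = L} = GL L" if L: "L \<in> subspaces n j" for L
  proof (rule equalityI; rule subsetI)
    fix g assume "g \<in> {g \<in> G. V.span_list g = L}"
    thus "g \<in> GL L" using V.set_subset_span_list[of g] unfolding G_def GL_def by auto
  next
    fix g assume g: "g \<in> GL L"
    have sub: "V.span_list g \<subseteq> L" using V.span_list_least[of L g] g L unfolding GL_def subspaces_def by auto
    have "card (V.span_list g) = card L" using V.card_span_list[of g] g L unfolding GL_def subspaces_def by simp
    hence "V.span_list g = L" using card_subset_eq[OF _ sub] L finite_subset[OF _ finite_Fq_vecs] unfolding subspaces_def by blast
    thus "g \<in> {g \<in> G. V.span_list g = L}" using g L unfolding GL_def G_def subspaces_def by auto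
  qed
  have cGL: "card (GL L) = (\<Prod>i<j. q ^ j - q ^ i)" if L: "L \<in> subspaces n j" for L
    unfolding GL_def using L finite_subset[OF _ finite_Fq_vecs, of L] unfolding subspaces_def
    by (intro V.card_independent_lists) auto
  have "card G = (\<Sum>L\<in>V.span_list ` G. card {g \<in> G. V.span_list g = L})" by (rule card_eq_sum_card_fibers[OF finG])
  also have "\<dots> = (\<Sum>L\<in>subspaces n j. (\<Prod>i<j. q ^ j - q ^ i))" unfolding img using fib cGL by simp
  finally show ?thesis using cG by simp
qed

lemma card_subspaces:
  assumes "j \<le> n"
  shows "real (card (subspaces n j)) = gauss_binom q n j"
proof -
  have q1: "q \<ge> 1" using q_ge_2 by simp
  have "real (card (subspaces n j)) * A_fun q j j = A_fun q n j"
    unfolding A_fun_of_nat[OF q1 order_refl] A_fun_of_nat[OF q1 assms]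
    using card_subspaces_mult[of n j] by (metis of_nat_mult)
  thus ?thesis unfolding gauss_binom_def using A_fun_pos[OF q_ge_2 order_refl, of j]
    by (simp add: eq_divide_eq)
qed

lemma card_rank_eq_le_N_rank:
  assumes "n \<le> m"
  shows "real (card {x \<in> vecs n. rk Fq x = i}) \<le> N_rank q m n i"
proof (cases "i \<le> n")
  case False
  hence "{x \<in> vecs n. rk Fq x = i} = {}" using rk_le_length by (force simp: vecs_def)
  hence "card {x \<in> vecs n. rk Fq x = i} = 0" by (simp only: card.empty)
  thus ?thesis using N_rank_nonneg[of q m n i] q_ge_2 by simp
next
  case True
  have "{x \<in> vecs n. rk Fq x = i} \<subseteq> (\<Union>L\<in>subspaces n (n - i). {x \<in> vecs n. relations x = L})"
    using relations_mem_subspaces by (auto simp: vecs_def)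
  hence "card {x \<in> vecs n. rk Fq x = i} \<le> card (\<Union>L\<in>subspaces n (n - i). {x \<in> vecs n. relations x = L})"
    by (intro card_mono) (auto simp: finite_subspaces finite_vecs)
  also have "\<dots> \<le> (\<Sum>L\<in>subspaces n (n - i). card {x \<in> vecs n. relations x = L})"
    by (rule card_UN_le[OF finite_subspaces])
  also have "\<dots> = card (subspaces n (n - i)) * (\<Prod>j<i. q ^ m - q ^ j)"
    using True by (simp add: card_relations_eq subspaces_def)
  finally have "real (card {x \<in> vecs n. rk Fq x = i})
      \<le> real (card (subspaces n (n - i))) * real (\<Prod>j<i. q ^ m - q ^ j)"
    by (simp only: of_nat_le_iff of_nat_mult[symmetric])
  also have "\<dots> = gauss_binom q n i * A_fun q m i"
    using card_subspaces[of "n - i" n] A_fun_of_nat[of q i m] gauss_binom_symmetric[OF q_ge_2 True]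
      True assms q_ge_2 by simp
  finally show ?thesis by (simp add: N_rank_def)
qed

lemma card_rank_le_le_V_ball:
  assumes "n \<le> m"
  shows "real (card {x \<in> vecs n. rk Fq x \<le> t}) \<le> V_ball q m n t"
proof -
  have "{x \<in> vecs n. rk Fq x \<le> t} = (\<Union>i\<le>t. {x \<in> vecs n. rk Fq x = i})" by auto
  hence "card {x \<in> vecs n. rk Fq x \<le> t} \<le> (\<Sum>i\<le>t. card {x \<in> vecs n. rk Fq x = i})"
    using card_UN_le[of "{..t}" "\<lambda>i. {x \<in> vecs n. rk Fq x = i}"] by simp
  hence "real (card {x \<in> vecs n. rk Fq x \<le> t}) \<le> (\<Sum>i\<le>t. real (card {x \<in> vecs n. rk Fq x = i}))"
    by (simp only: of_nat_le_iff of_nat_sum[symmetric])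
  also have "\<dots> \<le> (\<Sum>i\<le>t. N_rank q m n i)" by (intro sum_mono card_rank_eq_le_N_rank assms)
  finally show ?thesis unfolding V_ball_def .
qed

section \<open>Extensions of a word to a word of low rank\<close>

text \<open>\<open>low_rank_prefix_count t u s\<close> counts the \<open>g \<in> GF(q\<^sup>m)\<^sup>u\<close> with
  \<open>rk (g @ z) \<le> t\<close> for a fixed \<open>z\<close> of rank \<open>s\<close>: the first entry of \<open>g\<close> either lies
  in the span of \<open>z\<close> (\<open>q ^ s\<close> choices) or raises its dimension by one.\<close>

fun low_rank_prefix_count :: "nat \<Rightarrow> nat \<Rightarrow> nat \<Rightarrow> nat" where
  "low_rank_prefix_count t 0 s = (if s \<le> t then 1 else 0)"
| "low_rank_prefix_count t (Suc u) s
    = q ^ s * low_rank_prefix_count t u s + (q ^ m - q ^ s) * low_rank_prefix_count t u (Suc s)"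

lemma low_rank_prefix_count_eq_0: "s > t \<Longrightarrow> low_rank_prefix_count t u s = 0"
  by (induction u arbitrary: s) auto

lemma card_low_rank_prefixes_sumset:
  assumes "A.is_subspace S" "card S = q ^ s"
  shows "card {g \<in> vecs u. card (sumset S (A.span_list g)) \<le> q ^ t} = low_rank_prefix_count t u s"
  using assms
proof (induction u arbitrary: S s)
  case 0
  have "sumset S {0} = S" by (auto simp: sumset_def)
  hence c: "card (sumset S (A.span_list [])) \<le> q ^ t \<longleftrightarrow> s \<le> t" using 0 A.q_power_le_iff by simp
  have "{g \<in> vecs 0. card (sumset S (A.span_list g)) \<le> q ^ t} = (if s \<le> t then {[]} else {})"
    using c by (auto simp: vecs_def)
  thus ?case by simp
next
  case (Suc u)
  let ?P = "\<lambda>g. card (sumset S (A.span_list g)) \<le> q ^ t"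
  have key: "sumset S (A.span_list (x # g)) = sumset (A.adjoin S x) (A.span_list g)" for x g
    by (simp add: A.sumset_adjoin sumset_commute)
  have cnt: "card {g \<in> vecs u. ?P (x # g)} = (if x \<in> S then low_rank_prefix_count t u s else low_rank_prefix_count t u (Suc s))" for x
  proof -
    have e1: "{g \<in> vecs u. ?P (x # g)} = {g \<in> vecs u. card (sumset (A.adjoin S x) (A.span_list g)) \<le> q ^ t}"
      by (simp only: key)
    show ?thesis
    proof (cases "x \<in> S")
      case True
      hence "A.adjoin S x = S" using A.adjoin_eq Suc.prems(1) by blast
      thus ?thesis unfolding e1 using Suc.IH[OF Suc.prems] True by simp
    next
      case False
      have c: "card (A.adjoin S x) = q ^ Suc s"
        using A.card_adjoin[OF Suc.prems(1) _ False] Suc.prems(2) finite by simp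
      show ?thesis unfolding e1 using Suc.IH[OF A.adjoin_subspace[OF Suc.prems(1)] c] False by simp
    qed
  qed
  have "card {g \<in> vecs (Suc u). ?P g} = (\<Sum>x\<in>UNIV. card {g \<in> vecs u. ?P (x # g)})"
    by (rule card_vecs_Suc)
  also have "\<dots> = (\<Sum>x\<in>UNIV. if x \<in> S then low_rank_prefix_count t u s else low_rank_prefix_count t u (Suc s))"
    using cnt by simp
  also have "\<dots> = card S * low_rank_prefix_count t u s + card (UNIV - S) * low_rank_prefix_count t u (Suc s)"
    by (simp add: sum.If_cases Int_def Diff_eq)
  also have "card (UNIV - S) = q ^ m - q ^ s" using Suc.prems(2) card_UNIV_eq by (simp add: card_Diff_subset)
  finally show ?case using Suc.prems(2) by simp
qed

definition low_rank_prefixes :: "nat \<Rightarrow> nat \<Rightarrow> 'a list \<Rightarrow> nat" where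
  "low_rank_prefixes u t z = card {g \<in> vecs u. rk Fq (g @ z) \<le> t}"

lemma low_rank_prefixes_eq: "low_rank_prefixes u t z = low_rank_prefix_count t u (rk Fq z)"
proof -
  have "{g \<in> vecs u. rk Fq (g @ z) \<le> t} = {g \<in> vecs u. card (sumset (A.span_list z) (A.span_list g)) \<le> q ^ t}"
  proof -
    have "card (sumset (A.span_list z) (A.span_list g)) = q ^ rk Fq (g @ z)" for g
      using card_span_list_eq_rk[of "g @ z"] by (simp add: A.span_list_append sumset_commute)
    thus ?thesis using A.q_power_le_iff by simp
  qed
  thus ?thesis unfolding low_rank_prefixes_def using card_low_rank_prefixes_sumset[OF A.span_list_subspace card_span_list_eq_rk] by simp
qed

lemma rk_le_if_low_rank_prefixes_pos: "low_rank_prefixes u t z > 0 \<Longrightarrow> rk Fq z \<le> t"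
  using low_rank_prefix_count_eq_0[of t "rk Fq z" u] low_rank_prefixes_eq[of u t z] by (cases "rk Fq z \<le> t") auto

lemma sum_low_rank_prefixes: "(\<Sum>z\<in>vecs d. low_rank_prefixes u t z) = card {ev \<in> vecs (u + d). rk Fq ev \<le> t}"
  unfolding low_rank_prefixes_def by (rule card_vecs_add[symmetric])

lemma card_low_rank_fiber:
  assumes B: "is_basis n (hs2 @ hs1)" and z: "length z = length hs1"
  shows "card {x \<in> vecs n. rk Fq x \<le> t \<and> transform hs1 x = z} = low_rank_prefixes (length hs2) t z"
proof -
  have "rk Fq x = rk Fq (transform hs2 x @ transform hs1 x)" if "length x = n" for x
    using rk_transform[OF B that] by (simp add: transform_append)
  hence "{x \<in> vecs n. rk Fq x \<le> t \<and> transform hs1 x = z}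
      = {x \<in> vecs n. transform hs1 x = z \<and> rk Fq (transform hs2 x @ z) \<le> t}"
    by (auto simp: vecs_def)
  thus ?thesis
    using card_transform_fiber[OF B z, of "\<lambda>g. rk Fq (g @ z) \<le> t"] by (simp add: low_rank_prefixes_def)
qed

section \<open>Words close to a code\<close>

lemma inj_on_transform_code:
  assumes B: "is_basis n (hs2 @ hs1)" and C: "C \<subseteq> vecs n" "rank_dist_ge Fq C \<delta>"
    and u: "length hs2 < \<delta>"
  shows "inj_on (transform hs1) C"
proof (rule inj_onI, rule ccontr)
  fix c c' assume cc: "c \<in> C" "c' \<in> C" "transform hs1 c = transform hs1 c'" "c \<noteq> c'"
  have l: "length c = n" "length c' = n" using cc C(1) by (auto simp: vecs_def)
  have "transform hs1 (vdiff c c') = replicate (length hs1) 0"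
    using transform_vdiff[of c c' hs1] l cc(3) by (simp add: vdiff_self)
  hence "rk Fq (vdiff c c') \<le> length hs2"
    using rk_le_length_add_rk_transform[OF B, of "vdiff c c'"] l by (simp add: rk_replicate_0)
  moreover have "\<delta> \<le> rk Fq (vdiff c c')" using C(2) cc unfolding rank_dist_ge_def by blast
  ultimately show False using u by simp
qed

lemma rank_dist_ge_transform_code:
  assumes B: "is_basis n (hs2 @ hs1)" and C: "C \<subseteq> vecs n" "rank_dist_ge Fq C \<delta>"
  shows "rank_dist_ge Fq (transform hs1 ` C) (\<delta> - length hs2)"
  unfolding rank_dist_ge_def
proof (intro ballI impI)
  fix z z' assume "z \<in> transform hs1 ` C" "z' \<in> transform hs1 ` C" "z \<noteq> z'"
  then obtain c c' where cc: "c \<in> C" "c' \<in> C" "c \<noteq> c'" "z = transform hs1 c" "z' = transform hs1 c'"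
    by auto
  have l: "length c = n" "length c' = n" using cc C(1) by (auto simp: vecs_def)
  have "\<delta> \<le> rk Fq (vdiff c c')" using C(2) cc unfolding rank_dist_ge_def by blast
  also have "\<dots> \<le> length hs2 + rk Fq (transform hs1 (vdiff c c'))"
    using rk_le_length_add_rk_transform[OF B, of "vdiff c c'"] l by simp
  also have "transform hs1 (vdiff c c') = vdiff z z'" using transform_vdiff[of c c' hs1] l cc by simp
  finally show "\<delta> - length hs2 \<le> rk Fq (vdiff z z')" by simp
qed

lemma inj_on_transform_independent:
  assumes P: "P \<subseteq> vecs d" "rank_dist_ge Fq P (d - k + 1)" and kd: "k \<le> d"
    and ks: "set ks \<subseteq> Fq_vecs d" "V.dim_list ks = length ks" "length ks = k"
  shows "inj_on (transform ks) P"
proof (rule inj_onI, rule ccontr)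
  fix z z' assume zz: "z \<in> P" "z' \<in> P" "transform ks z = transform ks z'" "z \<noteq> z'"
  have lz: "length z = d" "length z' = d" using zz P(1) by (auto simp: vecs_def)
  have "transform ks (vdiff z z') = replicate (length ks) 0"
    using transform_vdiff[of z z' ks] lz zz(3) by (simp add: vdiff_self)
  hence "rk Fq (vdiff z z') + k \<le> d"
    using rk_add_length_le_if_transform_eq_0[of ks "vdiff z z'"] ks lz by simp
  moreover have "d - k + 1 \<le> rk Fq (vdiff z z')" using P(2) zz unfolding rank_dist_ge_def by blast
  ultimately show False using kd by simp
qed

text \<open>The codewords whose relation space contains a given \<open>(d - w)\<close>-dimensional
  subspace \<open>L\<close> are determined by \<open>k - (d - w)\<close> coordinates after a change of basis
  adapted to \<open>L\<close>.\<close>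

lemma card_code_relations_supset_le:
  assumes P: "P \<subseteq> vecs d" "rank_dist_ge Fq P (d - k + 1)" and kd: "k \<le> d"
    and L: "V.is_subspace L" "L \<subseteq> Fq_vecs d" "card L = q ^ (d - w)" and w: "w \<le> d" "d - w \<le> k"
  shows "card {z \<in> P. L \<subseteq> relations z} \<le> (q ^ m) ^ (k - (d - w))"
proof -
  obtain hs2 hs1 where B: "is_basis d (hs2 @ hs1)" "V.span_list hs1 = L" "set hs1 \<subseteq> L"
    "V.dim_list hs1 = length hs1"
    using exists_adapted_basis[OF L(1,2)] by blast
  have l1: "length hs1 = d - w" using V.card_span_list[of hs1] B(2,4) L(3) V.q_power_inject by metis
  have l2: "length hs2 = w" using length_basis[OF B(1)] l1 w by simp
  define ks where "ks = drop (d - k) hs2 @ hs1"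
  have ks_eq: "ks = drop (d - k) (hs2 @ hs1)" using l2 w kd by (simp add: ks_def)
  have inj: "inj_on (transform ks) P"
  proof (rule inj_on_transform_independent[OF P kd])
    show "set ks \<subseteq> Fq_vecs d"
      using B(1) set_drop_subset[of "d - k" "hs2 @ hs1"] unfolding is_basis_def ks_eq by blast
    show "V.dim_list ks = length ks"
      using V.dim_list_drop[of "hs2 @ hs1" "d - k"] B(1) unfolding is_basis_def ks_eq by simp
    show "length ks = k" using l1 l2 w kd by (simp add: ks_def)
  qed
  have "transform ks ` {z \<in> P. L \<subseteq> relations z} \<subseteq> (\<lambda>a. a @ replicate (d - w) 0) ` vecs (k - (d - w))"
  proof
    fix b assume "b \<in> transform ks ` {z \<in> P. L \<subseteq> relations z}"
    then obtain z where z: "z \<in> P" "L \<subseteq> relations z" "b = transform ks z" by auto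
    have "length z = d" using z P(1) by (auto simp: vecs_def)
    hence "transform hs1 z = replicate (d - w) 0"
      using span_list_subset_relations_iff[of hs1 z] B(2,3) L(2) z(2) l1 by auto
    hence "b = transform (drop (d - k) hs2) z @ replicate (d - w) 0"
      using z(3) by (simp add: ks_def transform_append)
    moreover have "transform (drop (d - k) hs2) z \<in> vecs (k - (d - w))" using l2 w kd by (simp add: vecs_def)
    ultimately show "b \<in> (\<lambda>a. a @ replicate (d - w) 0) ` vecs (k - (d - w))" by blast
  qed
  hence "card (transform ks ` {z \<in> P. L \<subseteq> relations z})
      \<le> card ((\<lambda>a. a @ replicate (d - w) 0) ` vecs (k - (d - w)))"
    by (intro card_mono finite_imageI finite_vecs)
  also have "\<dots> \<le> card (vecs (k - (d - w)))" by (intro card_image_le finite_vecs)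
  finally have "card (transform ks ` {z \<in> P. L \<subseteq> relations z}) \<le> card (vecs (k - (d - w)))" .
  moreover have "card (transform ks ` {z \<in> P. L \<subseteq> relations z}) = card {z \<in> P. L \<subseteq> relations z}"
    by (rule card_image) (rule inj_on_subset[OF inj], auto)
  ultimately show ?thesis by (simp add: card_vecs)
qed

text \<open>All words with the same relation space \<open>L = relations z\<^sub>0\<close> have rank \<open>w = rk z\<^sub>0\<close>
  and the same number of low-rank prefixes; there are \<open>A(m,w)\<close> of them in all of
  \<open>GF(q\<^sup>m)\<^sup>d\<close>, but at most \<open>(q ^ m) ^ (w - (d - k))\<close> in the code.\<close>

lemma sum_low_rank_prefixes_class_le:
  assumes P: "P \<subseteq> vecs d" "rank_dist_ge Fq P (d - k + 1)" and kd: "k \<le> d" and tm: "t \<le> m"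
    and z0: "length z0 = d" "d - k + 1 \<le> rk Fq z0"
  shows "(\<Sum>z\<in>{z \<in> P. relations z = relations z0}. real (low_rank_prefixes u t z))
    \<le> (real q ^ m) ^ t / A_fun q m t / (real q ^ m) ^ (d - k)
      * (\<Sum>z\<in>{z \<in> vecs d. relations z = relations z0}. real (low_rank_prefixes u t z))"
proof -
  define w where "w = rk Fq z0"
  define L where "L = relations z0"
  define \<phi> where "\<phi> = low_rank_prefix_count t u w"
  have wd: "w \<le> d" using rk_le_length[of z0] z0 by (simp add: w_def)
  have cL: "card L = q ^ (d - w)" using card_relations[of z0] z0 by (simp add: L_def w_def)
  have L: "V.is_subspace L" "L \<subseteq> Fq_vecs d" using relations_subspace relations_subset z0(1) by (auto simp: L_def)
  have constant_on_class: "low_rank_prefixes u t z = \<phi>" if "length z = d" "relations z = L" for z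
    using rk_eq_if_relations_eq[of z z0] that z0 low_rank_prefixes_eq[of u t z]
    by (simp add: \<phi>_def w_def L_def)
  have sum_class: "(\<Sum>z\<in>{z \<in> S. relations z = L}. real (low_rank_prefixes u t z))
      = real (card {z \<in> S. relations z = L}) * real \<phi>" if "S \<subseteq> vecs d" for S
    using constant_on_class that by (simp add: vecs_def subset_iff)
  have "real (card {z \<in> P. relations z = L}) * real \<phi>
      \<le> (real q ^ m) ^ t / A_fun q m t / (real q ^ m) ^ (d - k) * real (\<Prod>i<w. q ^ m - q ^ i) * real \<phi>"
  proof (cases "\<phi> = 0")
    case False
    hence wt: "w \<le> t"
      using rk_le_if_low_rank_prefixes_pos[of u t z0] constant_on_class[OF z0(1)] by (simp add: w_def L_def)
    have "card {z \<in> P. relations z = L} \<le> card {z \<in> P. L \<subseteq> relations z}"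
      using finite_subset[OF P(1) finite_vecs] by (intro card_mono) auto
    also have "\<dots> \<le> (q ^ m) ^ (k - (d - w))"
      using card_code_relations_supset_le[OF P kd L cL wd] z0(2) by (simp add: w_def)
    also have "k - (d - w) = w - (d - k)" using z0(2) kd wd by (simp add: w_def)
    finally have "real (card {z \<in> P. relations z = L}) \<le> (real q ^ m) ^ (w - (d - k))"
      by (simp flip: of_nat_power)
    also have "\<dots> \<le> (real q ^ m) ^ t / A_fun q m t / (real q ^ m) ^ (d - k) * A_fun q m w"
      using power_le_A_fun_ratio[OF q_ge_2, of "d - k" w t m] z0(2) wt tm by (simp add: w_def)
    also have "A_fun q m w = real (\<Prod>i<w. q ^ m - q ^ i)" using A_fun_of_nat[of q w m] q_ge_2 wt tm by simp
    finally show ?thesis by (intro mult_right_mono) auto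
  qed simp
  thus ?thesis
    using sum_class[OF P(1)] sum_class[OF order_refl] card_relations_eq[OF L cL wd]
    by (simp add: L_def mult.assoc)
qed

lemma sum_low_rank_prefixes_code_le:
  assumes P: "P \<subseteq> vecs d" "replicate d 0 \<in> P" "rank_dist_ge Fq P (d - k + 1)"
    and kd: "k \<le> d" and tm: "t \<le> m"
  shows "(\<Sum>z\<in>P - {replicate d 0}. real (low_rank_prefixes u t z))
    \<le> (real q ^ m) ^ t / A_fun q m t / (real q ^ m) ^ (d - k) * (\<Sum>z\<in>vecs d. real (low_rank_prefixes u t z))"
proof -
  define B where "B = (real q ^ m) ^ t / A_fun q m t / (real q ^ m) ^ (d - k)"
  define P' where "P' = P - {replicate d 0}"
  define f where "f z = real (low_rank_prefixes u t z)" for z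
  have B0: "B \<ge> 0" unfolding B_def using A_fun_pos[OF q_ge_2 tm] by simp
  have finP: "finite P" using finite_subset[OF P(1) finite_vecs] .
  have P'sub: "P' \<subseteq> vecs d" unfolding P'_def using P(1) by auto
  have per_class: "(\<Sum>z\<in>{z \<in> P'. relations z = L}. f z) \<le> B * (\<Sum>z\<in>{z \<in> vecs d. relations z = L}. f z)"
    if L: "L \<in> relations ` P'" for L
  proof -
    obtain z0 where z0: "z0 \<in> P'" "L = relations z0" using L by auto
    have lz0: "length z0 = d" using z0(1) P'sub by (auto simp: vecs_def)
    have "d - k + 1 \<le> rk Fq z0"
      using P(2,3) z0(1) vdiff_replicate_0[OF lz0] unfolding rank_dist_ge_def P'_def by force
    hence "(\<Sum>z\<in>{z \<in> P. relations z = L}. f z) \<le> B * (\<Sum>z\<in>{z \<in> vecs d. relations z = L}. f z)"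
      using sum_low_rank_prefixes_class_le[OF P(1,3) kd tm lz0] z0(2) by (simp add: B_def f_def)
    moreover have "(\<Sum>z\<in>{z \<in> P'. relations z = L}. f z) \<le> (\<Sum>z\<in>{z \<in> P. relations z = L}. f z)"
      using finP by (intro sum_mono2) (auto simp: P'_def f_def)
    ultimately show ?thesis by linarith
  qed
  have "(\<Sum>z\<in>P'. f z) = (\<Sum>L\<in>relations ` P'. \<Sum>z\<in>{z \<in> P'. relations z = L}. f z)"
    by (rule sum.image_gen) (use finP in \<open>simp add: P'_def\<close>)
  also have "\<dots> \<le> (\<Sum>L\<in>relations ` P'. B * (\<Sum>z\<in>{z \<in> vecs d. relations z = L}. f z))"
    using per_class by (intro sum_mono) auto
  also have "\<dots> \<le> (\<Sum>L\<in>relations ` vecs d. B * (\<Sum>z\<in>{z \<in> vecs d. relations z = L}. f z))"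
    using P'sub B0 by (intro sum_mono2 finite_imageI finite_vecs)
      (auto simp: f_def intro!: sum_nonneg mult_nonneg_nonneg)
  also have "\<dots> = B * (\<Sum>z\<in>vecs d. f z)"
    by (simp add: sum_distrib_left flip: sum.image_gen[OF finite_vecs])
  finally show ?thesis unfolding B_def P'_def f_def .
qed

lemma near_code_decomposition:
  assumes B: "is_basis n (hs2 @ hs1)"
    and C: "C \<subseteq> vecs n" "replicate n 0 \<in> C" "rank_dist_ge Fq C \<delta>" "length hs2 < \<delta>"
    and y: "length y = n" "transform hs1 y = replicate (length hs1) 0" "t < rk Fq y"
    and c: "c \<in> C" "rk Fq (vdiff y c) \<le> t"
  shows "transform hs1 c \<noteq> replicate (length hs1) 0"
    and "transform hs1 (vdiff y c) = map uminus (transform hs1 c)"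
proof -
  have lc: "length c = n" using c(1) C(1) by (auto simp: vecs_def)
  show "transform hs1 (vdiff y c) = map uminus (transform hs1 c)"
    using transform_vdiff[of y c hs1] y(1,2) lc vdiff_replicate_0_left[of "transform hs1 c"] by simp
  show "transform hs1 c \<noteq> replicate (length hs1) 0"
  proof
    assume "transform hs1 c = replicate (length hs1) 0"
    hence "rk Fq c < \<delta>" using rk_le_length_add_rk_transform[OF B lc] C(4) by (simp add: rk_replicate_0)
    hence "c = replicate n 0"
      using C(2,3) c(1) vdiff_replicate_0[OF lc] unfolding rank_dist_ge_def by force
    thus False using c(2) y(1,3) vdiff_replicate_0[OF y(1)] by simp
  qed
qed

text \<open>A word \<open>y\<close> at rank distance at most \<open>t\<close> from a codeword \<open>c\<close> is \<open>c + e\<close>; if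
  \<open>transform hs1 y = 0\<close>, the error \<open>e\<close> is determined up to \<open>low_rank_prefixes\<close>
  choices by \<open>transform hs1 c\<close>.\<close>

lemma card_near_code_le_sum:
  assumes B: "is_basis n (hs2 @ hs1)"
    and C: "C \<subseteq> vecs n" "replicate n 0 \<in> C" "rank_dist_ge Fq C \<delta>" "length hs2 < \<delta>"
  shows "card {y \<in> vecs n. transform hs1 y = replicate (length hs1) 0 \<and> t < rk Fq y
      \<and> (\<exists>c\<in>C. rk Fq (vdiff y c) \<le> t)}
    \<le> (\<Sum>z\<in>transform hs1 ` C - {replicate (length hs1) 0}. low_rank_prefixes (length hs2) t z)"
    (is "card ?X \<le> _")
proof -
  define C' where "C' = {c \<in> C. transform hs1 c \<noteq> replicate (length hs1) 0}"
  define E where "E c = {e \<in> vecs n. rk Fq e \<le> t \<and> transform hs1 e = map uminus (transform hs1 c)}" for c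
  have finC: "finite C" using finite_subset[OF C(1) finite_vecs] .
  have finE: "finite (E c)" for c unfolding E_def using finite_vecs by simp
  have "?X \<subseteq> (\<lambda>(c, e). map2 (+) c e) ` Sigma C' E"
  proof
    fix y assume "y \<in> ?X"
    then obtain c where y: "length y = n" "transform hs1 y = replicate (length hs1) 0" "t < rk Fq y"
      and c: "c \<in> C" "rk Fq (vdiff y c) \<le> t"
      by (auto simp: vecs_def)
    have lc: "length c = n" using c(1) C(1) by (auto simp: vecs_def)
    have "(c, vdiff y c) \<in> Sigma C' E"
      using near_code_decomposition[OF B C y c] c y(1) lc by (simp add: C'_def E_def vecs_def)
    moreover have "y = map2 (+) c (vdiff y c)"
      using y(1) lc by (intro nth_equalityI) (auto simp: nth_vdiff)
    ultimately show "y \<in> (\<lambda>(c, e). map2 (+) c e) ` Sigma C' E" by force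
  qed
  hence "card ?X \<le> card ((\<lambda>(c, e). map2 (+) c e) ` Sigma C' E)"
    using finC finE by (intro card_mono finite_imageI finite_SigmaI) (auto simp: C'_def)
  also have "\<dots> \<le> card (Sigma C' E)"
    using finC finE by (intro card_image_le finite_SigmaI) (auto simp: C'_def)
  also have "\<dots> = (\<Sum>c\<in>C'. card (E c))" using finC finE by (simp add: C'_def card_SigmaI)
  also have "\<dots> = (\<Sum>c\<in>C'. low_rank_prefixes (length hs2) t (transform hs1 c))"
    using card_low_rank_fiber[OF B, of "map uminus (transform hs1 _)" t]
    by (intro sum.cong) (simp_all add: E_def low_rank_prefixes_eq rk_map_uminus)
  also have "\<dots> = (\<Sum>z\<in>transform hs1 ` C'. low_rank_prefixes (length hs2) t z)"
    using inj_on_subset[OF inj_on_transform_code[OF B C(1,3,4)]]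
    by (simp add: sum.reindex C'_def)
  also have "transform hs1 ` C' = transform hs1 ` C - {replicate (length hs1) 0}" by (auto simp: C'_def)
  finally show ?thesis .
qed

lemma card_near_code_relations_le:
  assumes C: "C \<subseteq> vecs n" "replicate n 0 \<in> C" "rank_dist_ge Fq C (n - k + 1)"
    and ku: "u + k \<le> n" and tu: "t < u" and tm: "t \<le> m" and R: "R \<in> subspaces n (n - u)"
  shows "real (card {y \<in> vecs n. relations y = R \<and> (\<exists>c\<in>C. rk Fq (vdiff y c) \<le> t)})
    \<le> (real q ^ m) ^ t / A_fun q m t / (real q ^ m) ^ (n - u - k) * real (card {x \<in> vecs n. rk Fq x \<le> t})"
proof -
  define d where "d = n - u"
  have R': "V.is_subspace R" "R \<subseteq> Fq_vecs n" "card R = q ^ d" using R by (auto simp: subspaces_def d_def)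
  obtain hs2 hs1 where B: "is_basis n (hs2 @ hs1)" "V.span_list hs1 = R" "set hs1 \<subseteq> R"
    "V.dim_list hs1 = length hs1"
    using exists_adapted_basis[OF R'(1,2)] by blast
  have l1: "length hs1 = d" using V.card_span_list[of hs1] B(2,4) R'(3) V.q_power_inject by metis
  have l2: "length hs2 = u" using length_basis[OF B(1)] l1 ku by (simp add: d_def)
  define P where "P = transform hs1 ` C"
  have "n - k + 1 - length hs2 = d - k + 1" using l2 ku by (simp add: d_def)
  hence P: "P \<subseteq> vecs d" "replicate d 0 \<in> P" "rank_dist_ge Fq P (d - k + 1)"
    using rank_dist_ge_transform_code[OF B(1) C(1,3)] transform_replicate_0[of hs1 n] C(2) l1
    by (auto simp: P_def vecs_def intro: image_eqI[of _ _ "replicate n 0"])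
  have hs1: "set hs1 \<subseteq> Fq_vecs (length y)" if "y \<in> vecs n" for y
    using B(3) R'(2) that by (auto simp: vecs_def)
  have rk_u: "rk Fq y = u" if "y \<in> vecs n" "relations y = R" for y
    using card_relations_eq_iff[of y n u] that R'(3) ku by (simp add: vecs_def d_def)
  have "{y \<in> vecs n. relations y = R \<and> (\<exists>c\<in>C. rk Fq (vdiff y c) \<le> t)}
      \<subseteq> {y \<in> vecs n. transform hs1 y = replicate (length hs1) 0 \<and> t < rk Fq y
        \<and> (\<exists>c\<in>C. rk Fq (vdiff y c) \<le> t)}"
    using span_list_subset_relations_iff[OF hs1] rk_u B(2) tu by auto
  hence "card {y \<in> vecs n. relations y = R \<and> (\<exists>c\<in>C. rk Fq (vdiff y c) \<le> t)}
      \<le> card {y \<in> vecs n. transform hs1 y = replicate (length hs1) 0 \<and> t < rk Fq y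
        \<and> (\<exists>c\<in>C. rk Fq (vdiff y c) \<le> t)}"
    by (intro card_mono) (simp_all add: finite_vecs)
  also have "\<dots> \<le> (\<Sum>z\<in>P - {replicate d 0}. low_rank_prefixes u t z)"
    using card_near_code_le_sum[OF B(1) C, of t] l1 l2 ku by (simp add: P_def)
  finally have "card {y \<in> vecs n. relations y = R \<and> (\<exists>c\<in>C. rk Fq (vdiff y c) \<le> t)}
      \<le> (\<Sum>z\<in>P - {replicate d 0}. low_rank_prefixes u t z)" .
  hence "real (card {y \<in> vecs n. relations y = R \<and> (\<exists>c\<in>C. rk Fq (vdiff y c) \<le> t)})
      \<le> (\<Sum>z\<in>P - {replicate d 0}. real (low_rank_prefixes u t z))"
    by (simp only: of_nat_le_iff of_nat_sum[symmetric])
  also have "\<dots> \<le> (real q ^ m) ^ t / A_fun q m t / (real q ^ m) ^ (d - k) * (\<Sum>z\<in>vecs d. real (low_rank_prefixes u t z))"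
    using sum_low_rank_prefixes_code_le[OF P _ tm] ku by (simp add: d_def)
  also have "(\<Sum>z\<in>vecs d. real (low_rank_prefixes u t z)) = real (card {x \<in> vecs n. rk Fq x \<le> t})"
    using sum_low_rank_prefixes[of u t d] ku by (simp add: d_def flip: of_nat_sum)
  finally show ?thesis by (simp add: d_def)
qed

lemma card_rank_near_code_le:
  assumes C: "C \<subseteq> vecs n" "replicate n 0 \<in> C" "rank_dist_ge Fq C (n - k + 1)"
    and ku: "u + k \<le> n" and tu: "t < u" and tm: "t \<le> m" and nm: "n \<le> m"
  shows "real (card {y. length y = n \<and> rk Fq y = u \<and> (\<exists>c\<in>C. rk Fq (vdiff y c) \<le> t)})
    \<le> gauss_binom q n u * ((real q ^ m) ^ t / A_fun q m t / (real q ^ m) ^ (n - u - k)) * V_ball q m n t"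
proof -
  define B where "B = (real q ^ m) ^ t / A_fun q m t / (real q ^ m) ^ (n - u - k)"
  define X where "X R = {y \<in> vecs n. relations y = R \<and> (\<exists>c\<in>C. rk Fq (vdiff y c) \<le> t)}" for R
  have "{y. length y = n \<and> rk Fq y = u \<and> (\<exists>c\<in>C. rk Fq (vdiff y c) \<le> t)}
      \<subseteq> (\<Union>R\<in>subspaces n (n - u). X R)"
    using relations_mem_subspaces by (force simp: X_def vecs_def)
  hence "card {y. length y = n \<and> rk Fq y = u \<and> (\<exists>c\<in>C. rk Fq (vdiff y c) \<le> t)}
      \<le> card (\<Union>R\<in>subspaces n (n - u). X R)"
    by (intro card_mono) (auto simp: finite_subspaces X_def finite_vecs)
  also have "\<dots> \<le> (\<Sum>R\<in>subspaces n (n - u). card (X R))" by (rule card_UN_le[OF finite_subspaces])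
  finally have "real (card {y. length y = n \<and> rk Fq y = u \<and> (\<exists>c\<in>C. rk Fq (vdiff y c) \<le> t)})
      \<le> (\<Sum>R\<in>subspaces n (n - u). real (card (X R)))"
    by (simp only: of_nat_le_iff of_nat_sum[symmetric])
  also have "\<dots> \<le> (\<Sum>R\<in>subspaces n (n - u). B * real (card {x \<in> vecs n. rk Fq x \<le> t}))"
    using card_near_code_relations_le[OF C ku tu tm] by (intro sum_mono) (simp add: X_def B_def)
  also have "\<dots> = gauss_binom q n u * B * real (card {x \<in> vecs n. rk Fq x \<le> t})"
    using card_subspaces[of "n - u" n] gauss_binom_symmetric[OF q_ge_2, of u n] ku by simp
  also have "\<dots> \<le> gauss_binom q n u * B * V_ball q m n t"
    using card_rank_le_le_V_ball[OF nm] gauss_binom_pos[OF q_ge_2, of u n] A_fun_pos[OF q_ge_2 tm] ku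
    by (intro mult_left_mono mult_nonneg_nonneg) (auto simp: B_def)
  finally show ?thesis unfolding B_def .
qed

end

theorem proposition4:
  fixes C :: "('a::{finite,field}) list set"
    and p e q m n k u :: nat
  assumes "prime p" and "e \<ge> 1" and "q = p ^ e"
    and "card (UNIV :: 'a set) = q ^ m"
    and "C \<subseteq> {x. length x = n}"
    and "replicate n 0 \<in> C"
    and "n \<le> m"
    and "1 \<le> k" and "k \<le> n"
    and "card C = q ^ (m * k)"
    and "min_rank_dist (base_field q) C = n - k + 1"
    and "n - k + 1 - (n - k) div 2 \<le> u" and "u < n - k + 1"
  shows "real (card {y. length y = n \<and> rk (base_field q) y = u \<and>
                 (\<exists>c\<in>C. rk (base_field q) (vdiff y c) \<le> (n - k) div 2)})
         < real q ^ 2 / (real q ^ 2 - 1) * gauss_binom q n u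
           * (real q ^ m - 1) powi (int u - int (n - k))
           * V_ball q m n ((n - k) div 2)"
proof -
  interpret gf_extension p e q m
    using assms(1-4,7-9) by unfold_locales auto
  define t where "t = (n - k) div 2"
  have C: "C \<subseteq> vecs n" using assms(5) by (simp add: vecs_def)
  have dist: "rank_dist_ge Fq C (n - k + 1)"
    using rank_dist_ge_min_rank_dist[OF finite_subset[OF C finite_vecs], of Fq] assms(11) by simp
  have "(n - k) mod 2 < 2" by simp
  hence "2 * t \<le> n - k" "n - k \<le> 2 * t + 1"
    using div_mult_mod_eq[of "n - k" 2] unfolding t_def by linarith+
  moreover have "n - k + 1 - t \<le> u" using assms(12) by (simp add: t_def)
  ultimately have t: "t < u" "t + 2 \<le> m" using assms(7-9,13) by linarith+
  have u: "u + k \<le> n" "int u - int (n - k) = - int (n - u - k)" using assms(9,13) by auto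
  have "real (card {y. length y = n \<and> rk Fq y = u \<and> (\<exists>c\<in>C. rk Fq (vdiff y c) \<le> t)})
      \<le> gauss_binom q n u * ((real q ^ m) ^ t / A_fun q m t / (real q ^ m) ^ (n - u - k)) * V_ball q m n t"
    using card_rank_near_code_le[OF C assms(6) dist u(1) t(1)] t(2) assms(7) by simp
  also have "\<dots> < gauss_binom q n u * (real q ^ 2 / (real q ^ 2 - 1) * (real q ^ m - 1) powi (- int (n - u - k)))
      * V_ball q m n t"
    using power_div_A_fun_div_power_less[OF q_ge_2 t(2), where x = "n - u - k"] gauss_binom_pos[OF q_ge_2, of u n]
      V_ball_pos[of q m n t] q_ge_2 u(1)
    by (intro mult_strict_right_mono mult_strict_left_mono) auto
  finally show ?thesis by (simp add: t_def u(2) mult_ac)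
qed

end
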